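(* Let $n\ge2$, let $p\in\{2,\dots,n\}$, and let $\mathcal V_p\subseteq M_n(\mathbb C)$ be the subspace of all matrices having zero entries at positions $(1,p),(1,p+1),\dots,(1,n)$. If $p\ge3$, then $\mathcal V_p$ contains no nonzero matrix that is left-symmetric relative to $\mathcal V_p$. If $p=2$, then $\mathcal V_2$ contains nonzero matrices that are left-symmetric relative to $\mathcal V_2$, and all of them have rank one; moreover, if $p=2$ and $n\ge3$, then $A\in\mathcal V_2$ is left-symmetric relative to $\mathcal V_2$ if and only if $A\in\mathbb C E_{11}$.
   Context: $M_n(\mathbb C)$ carries the operator (spectral) norm; $E_{ij}$ are the matrix units. $A\perp B$ (Birkhoff–James orthogonality) means $\|A+\lambda B\|\ge\|A\|$ for all $\lambda\in\mathbb C$. For a subset $\mathcal S$, an element $A\in\mathcal S$ is left-symmetric relative to $\mathcal S$ if for every $B\in\mathcal S$, $A\perp B$ implies $B\perp A$. *)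

theory Defs
  imports Complex_Main "Jordan_Normal_Form.DL_Rank"
begin

(* Matrices in M_n(C) are "complex mat" in carrier_mat n n; indices are 0-based,
   so the paper's entry (i,j) is  A $$ (i-1, j-1). *)

definition vnorm :: "complex vec \<Rightarrow> real" where
  "vnorm v = sqrt (\<Sum>i<dim_vec v. (cmod (v $ i))\<^sup>2)"

definition opnorm :: "complex mat \<Rightarrow> real" where
  "opnorm A = Sup {vnorm (A *\<^sub>v v) | v. v \<in> carrier_vec (dim_col A) \<and> vnorm v \<le> 1}"

definition bj_orth :: "complex mat \<Rightarrow> complex mat \<Rightarrow> bool" where
  "bj_orth A B \<longleftrightarrow> (\<forall>c::complex. opnorm (A + c \<cdot>\<^sub>m B) \<ge> opnorm A)"

definition left_symmetric :: "complex mat set \<Rightarrow> complex mat \<Rightarrow> bool" where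
  "left_symmetric S A \<longleftrightarrow> A \<in> S \<and> (\<forall>B\<in>S. bj_orth A B \<longrightarrow> bj_orth B A)"

definition Vp :: "nat \<Rightarrow> nat \<Rightarrow> complex mat set" where
  "Vp n p = {A \<in> carrier_mat n n. \<forall>k. p \<le> k \<and> k \<le> n \<longrightarrow> A $$ (0, k - 1) = 0}"

definition E11 :: "nat \<Rightarrow> complex mat" where
  "E11 n = mat n n (\<lambda>(i, j). if i = 0 \<and> j = 0 then 1 else 0)"

end

(*
  Two criteria for Birkhoff-James orthogonality drive the proof. If x is a unit norming vector
  of A (that is, |A x| = |A|) and <A x, B x> = 0, then A \<perp> B. Conversely, if w is, up to a
  phase, the only norming vector of B, with a quadratic gap in |B v|\<^sup>2 away from the line
  through w, then B \<perp> A forces <B w, A w> = 0: otherwise B - t (c / |c|) A, with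
  c = <B w, A w>, has smaller norm than B for small t > 0.

  Let A \<in> V_p be left-symmetric with norming vector x. For w \<perp> x and z w\<^sup>* \<in> V_p we get
  A \<perp> z w\<^sup>* because z w\<^sup>* maps x to 0, hence z w\<^sup>* \<perp> A and <z, A w> = 0. Choosing z as
  the part of A w below the first row, and z = e_1 against the first row of A, shows that A
  vanishes on x\<^sup>\<perp>; so A = (A x) x\<^sup>* has rank one. The rank-two probes
  B = 5 z_1 m\<^sup>* + z_2 (4 x + 3 m)\<^sup>*, with z_1 \<perp> z_2, <z_2, A x> = 0 and A m = 0, satisfy
  A \<perp> B but, having a norm gap at x + 2 m, not B \<perp> A unless <z_1, A x> = 0. Fitting them
  into V_p shows that A x is a multiple of e_1 when n \<ge> 3, and that A x = 0 when p \<ge> 3.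
  For p = 2, finally, a matrix B \<in> V_2 with c E_11 \<perp> B has vanishing first row, and then
  B \<perp> c E_11.
*)

theory Submission
  imports Defs "HOL-Analysis.Function_Topology" "HOL-Analysis.Topology_Euclidean_Space"
    "Jordan_Normal_Form.DL_Rank_Submatrix"
begin

no_notation Finite_Cartesian_Product.vec_nth (infixl \<open>$\<close> 90)
hide_type (open) Finite_Cartesian_Product.vec

subsection \<open>Inner product and norm of complex vectors\<close>

definition vinner :: "complex vec \<Rightarrow> complex vec \<Rightarrow> complex" where
  "vinner v w = (\<Sum>i<dim_vec v. v $ i * cnj (w $ i))"

definition vnorm2 :: "complex vec \<Rightarrow> real" where
  "vnorm2 v = (\<Sum>i<dim_vec v. (cmod (v $ i))\<^sup>2)"

lemma vnorm2_nonneg: "vnorm2 v \<ge> 0"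
  unfolding vnorm2_def by (simp add: sum_nonneg)

lemma vnorm_eq_sqrt_vnorm2: "vnorm v = sqrt (vnorm2 v)"
  unfolding vnorm_def vnorm2_def by simp

lemma power2_vnorm: "(vnorm v)\<^sup>2 = vnorm2 v"
  by (simp add: vnorm_eq_sqrt_vnorm2 vnorm2_nonneg)

lemma vnorm_nonneg: "vnorm v \<ge> 0"
  by (simp add: vnorm_eq_sqrt_vnorm2 vnorm2_nonneg)

lemma vnorm_eq_1_iff: "vnorm v = 1 \<longleftrightarrow> vnorm2 v = 1"
  by (simp add: vnorm_eq_sqrt_vnorm2)

lemma vnorm_le_1_iff: "vnorm v \<le> 1 \<longleftrightarrow> vnorm2 v \<le> 1"
  by (simp add: vnorm_eq_sqrt_vnorm2)

lemma vinner_self: "vinner v v = of_real (vnorm2 v)"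
  unfolding vinner_def vnorm2_def of_real_sum
  by (rule sum.cong) (simp_all only: complex_norm_square)

lemma vinner_commute: "dim_vec w = dim_vec v \<Longrightarrow> vinner w v = cnj (vinner v w)"
  unfolding vinner_def by (simp add: mult.commute)

lemma vinner_eq_0_commute: "dim_vec w = dim_vec v \<Longrightarrow> vinner v w = 0 \<Longrightarrow> vinner w v = 0"
  using vinner_commute[of w v] by simp

lemma vinner_cauchy_schwarz:
  assumes "dim_vec w = dim_vec v"
  shows "cmod (vinner v w) \<le> vnorm v * vnorm w"
proof -
  have "cmod (vinner v w) \<le> (\<Sum>i<dim_vec v. \<bar>cmod (v $ i)\<bar> * \<bar>cmod (w $ i)\<bar>)"
    unfolding vinner_def by (rule order_trans[OF norm_sum]) (simp add: norm_mult)
  also have "\<dots> \<le> L2_set (\<lambda>i. cmod (v $ i)) {..<dim_vec v} * L2_set (\<lambda>i. cmod (w $ i)) {..<dim_vec v}"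
    by (rule L2_set_mult_ineq)
  also have "\<dots> = vnorm v * vnorm w"
    using assms by (simp add: vnorm_def L2_set_def)
  finally show ?thesis .
qed

lemma vinner_add_left: "dim_vec u = dim_vec v \<Longrightarrow> vinner (u + v) w = vinner u w + vinner v w"
  unfolding vinner_def by (simp add: distrib_right sum.distrib)

lemma vinner_add_right:
  "dim_vec u = dim_vec v \<Longrightarrow> dim_vec w = dim_vec u \<Longrightarrow> vinner w (u + v) = vinner w u + vinner w v"
  unfolding vinner_def by (simp add: distrib_left sum.distrib)

lemma vinner_smult_left: "vinner (c \<cdot>\<^sub>v v) w = c * vinner v w"
  unfolding vinner_def by (simp add: sum_distrib_left mult.assoc)

lemma vinner_smult_right: "dim_vec w = dim_vec v \<Longrightarrow> vinner w (c \<cdot>\<^sub>v v) = cnj c * vinner w v"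
  unfolding vinner_def by (simp add: sum_distrib_left algebra_simps)

lemma vinner_unit_vec_left:
  assumes "v \<in> carrier_vec n" "j < n"
  shows "vinner (unit_vec n j) v = cnj (v $ j)"
proof -
  have "vinner (unit_vec n j) v = (\<Sum>i<n. if i = j then cnj (v $ j) else 0)"
    unfolding vinner_def using assms by (intro sum.cong) auto
  then show ?thesis using assms by simp
qed

lemma vinner_unit_vec_right: "v \<in> carrier_vec n \<Longrightarrow> j < n \<Longrightarrow> vinner v (unit_vec n j) = v $ j"
  using vinner_commute[of v "unit_vec n j"] vinner_unit_vec_left[of v n j] by simp

lemma vnorm2_add:
  assumes "dim_vec u = dim_vec v"
  shows "vnorm2 (u + v) = vnorm2 u + vnorm2 v + 2 * Re (vinner u v)"
proof -
  have "of_real (vnorm2 (u + v)) = vinner (u + v) (u + v)" by (simp add: vinner_self)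
  also have "\<dots> = vinner u u + vinner v v + (vinner u v + vinner v u)"
    using assms by (simp add: vinner_add_left vinner_add_right)
  also have "vinner v u = cnj (vinner u v)" by (rule vinner_commute) (use assms in simp)
  finally have "of_real (vnorm2 (u + v))
      = of_real (vnorm2 u) + of_real (vnorm2 v) + (vinner u v + cnj (vinner u v))"
    by (simp add: vinner_self)
  then have "Re (of_real (vnorm2 (u + v)))
      = Re (of_real (vnorm2 u) + of_real (vnorm2 v) + (vinner u v + cnj (vinner u v)))"
    by (rule arg_cong)
  then show ?thesis by simp
qed

lemma vnorm2_add_orth:
  "dim_vec u = dim_vec v \<Longrightarrow> vinner u v = 0 \<Longrightarrow> vnorm2 (u + v) = vnorm2 u + vnorm2 v"
  by (simp add: vnorm2_add)

lemma vnorm2_smult: "vnorm2 (c \<cdot>\<^sub>v v) = (cmod c)\<^sup>2 * vnorm2 v"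
  unfolding vnorm2_def by (simp add: norm_mult power_mult_distrib sum_distrib_left)

lemma vnorm2_add_smult:
  "dim_vec u = dim_vec v \<Longrightarrow>
    vnorm2 (u + c \<cdot>\<^sub>v v) = vnorm2 u + (cmod c)\<^sup>2 * vnorm2 v + 2 * Re (cnj c * vinner u v)"
  by (simp add: vnorm2_add vnorm2_smult vinner_smult_right)

lemma vnorm_smult: "vnorm (c \<cdot>\<^sub>v v) = cmod c * vnorm v"
  by (simp add: vnorm_eq_sqrt_vnorm2 vnorm2_smult real_sqrt_mult)

lemma vnorm2_eq_0_iff: "vnorm2 v = 0 \<longleftrightarrow> v = 0\<^sub>v (dim_vec v)"
proof
  assume "vnorm2 v = 0"
  then have "\<forall>i\<in>{..<dim_vec v}. (cmod (v $ i))\<^sup>2 = 0"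
    unfolding vnorm2_def by (subst sum_nonneg_eq_0_iff[symmetric]) auto
  then show "v = 0\<^sub>v (dim_vec v)" by (intro eq_vecI) auto
next
  have "vnorm2 (0\<^sub>v m) = 0" for m by (simp add: vnorm2_def)
  then show "v = 0\<^sub>v (dim_vec v) \<Longrightarrow> vnorm2 v = 0" by metis
qed

lemma vnorm_pos: "v \<noteq> 0\<^sub>v (dim_vec v) \<Longrightarrow> vnorm v > 0"
  using vnorm2_eq_0_iff[of v] vnorm2_nonneg[of v] by (simp add: vnorm_eq_sqrt_vnorm2)

lemma vnorm2_unit_vec:
  assumes "j < n" shows "vnorm2 (unit_vec n j) = 1"
proof -
  have "vnorm2 (unit_vec n j) = (\<Sum>i<n. if i = j then 1 else 0)"
    unfolding vnorm2_def using assms by (intro sum.cong) auto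
  then show ?thesis using assms by simp
qed

lemma exists_nonzero_index:
  assumes "x \<in> carrier_vec n" "vnorm2 x = 1"
  obtains k where "k < n" "x $ k \<noteq> 0"
proof -
  have "x \<noteq> 0\<^sub>v n" using assms vnorm2_eq_0_iff[of x] by auto
  then show thesis using that assms(1) by (metis eq_vecI carrier_vecD index_zero_vec)
qed

lemma vnorm2_orthonormal_comb:
  assumes "z1 \<in> carrier_vec n" "vnorm2 z1 = 1" "z2 \<in> carrier_vec n" "vnorm2 z2 = 1"
    and "vinner z1 z2 = 0"
  shows "vnorm2 (a \<cdot>\<^sub>v z1 + b \<cdot>\<^sub>v z2) = (cmod a)\<^sup>2 + (cmod b)\<^sup>2"
  using assms by (simp add: vnorm2_add_orth vinner_smult_left vinner_smult_right vnorm2_smult)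

lemma vec_orth_decomp:
  assumes v: "v \<in> carrier_vec n" and w: "w \<in> carrier_vec n" "vnorm2 w = 1"
  obtains r where "r \<in> carrier_vec n" "v = vinner v w \<cdot>\<^sub>v w + r" "vinner r w = 0"
    "vnorm2 v = (cmod (vinner v w))\<^sup>2 + vnorm2 r"
proof -
  define \<alpha> where "\<alpha> = vinner v w"
  define r where "r = v + (- \<alpha>) \<cdot>\<^sub>v w"
  have r: "r \<in> carrier_vec n" unfolding r_def using v w by simp
  have v_eq: "v = \<alpha> \<cdot>\<^sub>v w + r" using v w by (intro eq_vecI) (auto simp: r_def)
  have "vinner w w = 1" using w(2) by (simp add: vinner_self)
  then have rw: "vinner r w = 0"
    unfolding r_def \<alpha>_def using v w by (simp add: vinner_add_left vinner_smult_left)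
  then have "vinner (\<alpha> \<cdot>\<^sub>v w) r = 0"
    using r w vinner_eq_0_commute[of w r] by (simp add: vinner_smult_left)
  then have "vnorm2 v = (cmod \<alpha>)\<^sup>2 + vnorm2 r"
    using r w by (subst v_eq) (simp add: vnorm2_add_orth vnorm2_smult)
  then show thesis using that r v_eq rw unfolding \<alpha>_def by blast
qed

lemma vinner_orthonormal_bessel:
  assumes v: "v \<in> carrier_vec n" and x: "x \<in> carrier_vec n" "vnorm2 x = 1"
    and m: "m \<in> carrier_vec n" "vnorm2 m = 1" and xm: "vinner x m = 0"
  shows "(cmod (vinner v x))\<^sup>2 + (cmod (vinner v m))\<^sup>2 \<le> vnorm2 v"
proof -
  obtain r where r: "r \<in> carrier_vec n" "v = vinner v x \<cdot>\<^sub>v x + r"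
    and v_split: "vnorm2 v = (cmod (vinner v x))\<^sup>2 + vnorm2 r"
    using vec_orth_decomp[OF v x] .
  have "vinner v m = vinner (vinner v x \<cdot>\<^sub>v x + r) m"
    using r(2) by (rule arg_cong[where f = "\<lambda>u. vinner u m"])
  also have "\<dots> = vinner v x * vinner x m + vinner r m"
    using x r(1) by (simp add: vinner_add_left vinner_smult_left)
  finally have "vinner v m = vinner r m" using xm by simp
  moreover have "vnorm m = 1" using m(2) by (simp add: vnorm_eq_1_iff)
  ultimately have "cmod (vinner v m) \<le> vnorm r"
    using vinner_cauchy_schwarz[of m r] m(1) r(1) by simp
  then have "(cmod (vinner v m))\<^sup>2 \<le> vnorm2 r"
    using power_mono[of _ _ 2] by (fastforce simp: power2_vnorm)
  then show ?thesis using v_split by simp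
qed

definition vnormalize :: "complex vec \<Rightarrow> complex vec" where
  "vnormalize v = complex_of_real (1 / vnorm v) \<cdot>\<^sub>v v"

lemma dim_vnormalize [simp]: "dim_vec (vnormalize v) = dim_vec v"
  unfolding vnormalize_def by simp

lemma vnormalize_carrier [simp]: "v \<in> carrier_vec n \<Longrightarrow> vnormalize v \<in> carrier_vec n"
  unfolding vnormalize_def by simp

lemma vnormalize_index: "i < dim_vec v \<Longrightarrow> vnormalize v $ i = complex_of_real (1 / vnorm v) * v $ i"
  unfolding vnormalize_def by simp

lemma vnorm2_vnormalize: "v \<noteq> 0\<^sub>v (dim_vec v) \<Longrightarrow> vnorm2 (vnormalize v) = 1"
  using vnorm_pos[of v] power2_vnorm[of v]
  by (auto simp: vnormalize_def vnorm2_smult norm_divide power_divide)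

lemma vinner_vnormalize_left: "vinner (vnormalize v) w = complex_of_real (1 / vnorm v) * vinner v w"
  unfolding vnormalize_def by (rule vinner_smult_left)

lemma exists_unit_orth_on_pair:
  fixes y :: "complex vec"
  assumes y: "y \<in> carrier_vec n" and kj: "k < n" "j < n" "k \<noteq> j" and yk: "y $ k \<noteq> 0"
  obtains q where "q \<in> carrier_vec n" "vnorm2 q = 1" "vinner q y = 0"
    "\<And>i. i < n \<Longrightarrow> i \<noteq> k \<Longrightarrow> i \<noteq> j \<Longrightarrow> q $ i = 0"
proof -
  define u where "u = Matrix.vec n (\<lambda>i. if i = k then cnj (y $ j)
    else if i = j then - cnj (y $ k) else 0)"
  have "u $ j \<noteq> 0" using kj yk by (simp add: u_def)
  then have u: "u \<in> carrier_vec n" "u \<noteq> 0\<^sub>v n" using kj by (auto simp del: index_vec simp: u_def)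
  have "vinner u y = (\<Sum>i<n. (if i = k then cnj (y $ j) * cnj (y $ k) else 0)
      + (if i = j then - cnj (y $ k) * cnj (y $ j) else 0))"
    unfolding vinner_def u_def using kj by (intro sum.cong) auto
  also have "\<dots> = 0" using kj by (simp add: sum.distrib)
  finally have "vinner (vnormalize u) y = 0" by (simp add: vinner_vnormalize_left)
  moreover have "vnormalize u $ i = 0" if "i < n" "i \<noteq> k" "i \<noteq> j" for i
    using that u by (simp add: vnormalize_index u_def)
  moreover have "vnorm2 (vnormalize u) = 1" using u by (simp add: vnorm2_vnormalize)
  ultimately show thesis using u(1) by (intro that[of "vnormalize u"]) simp_all
qed

lemma exists_orthonormal_pair_off_head:
  fixes y :: "complex vec"
  assumes y: "y \<in> carrier_vec n" and n: "3 \<le> n" and k: "1 \<le> k" "k < n" "y $ k \<noteq> 0"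
  obtains z1 z2 where "z1 \<in> carrier_vec n" "vnorm2 z1 = 1" "z2 \<in> carrier_vec n" "vnorm2 z2 = 1"
    "vinner z1 z2 = 0" "z1 $ 0 = 0" "z2 $ 0 = 0" "vinner z1 y \<noteq> 0" "vinner z2 y = 0"
proof -
  define j where "j = (if k = 1 then 2 else 1 :: nat)"
  have j: "1 \<le> j" "j < n" "k \<noteq> j" unfolding j_def using k n by auto
  define y' where "y' = Matrix.vec n (\<lambda>i. if i = 0 then 0 else y $ i)"
  have "y' $ k \<noteq> 0" using k by (simp add: y'_def)
  then have y': "y' \<in> carrier_vec n" "y' \<noteq> 0\<^sub>v n" using k by (auto simp del: index_vec simp: y'_def)
  define z1 where "z1 = vnormalize y'"
  have z1: "z1 \<in> carrier_vec n" "vnorm2 z1 = 1" "z1 $ 0 = 0"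
    using y' n by (simp_all add: z1_def vnorm2_vnormalize vnormalize_index y'_def)
  obtain z2 where z2: "z2 \<in> carrier_vec n" "vnorm2 z2 = 1" "vinner z2 y = 0"
    and z2_supp: "\<And>i. i < n \<Longrightarrow> i \<noteq> k \<Longrightarrow> i \<noteq> j \<Longrightarrow> z2 $ i = 0"
    using exists_unit_orth_on_pair[OF y k(2) j(2,3) k(3)] by blast
  have z2_0: "z2 $ 0 = 0" using z2_supp n k j by simp
  have "vinner y' z2 = vinner y z2"
    unfolding vinner_def using y y' z2_0 by (intro sum.cong) (auto simp: y'_def)
  also have "\<dots> = 0" using y z2 vinner_eq_0_commute[of y z2] by simp
  finally have "vinner z1 z2 = 0" by (simp add: z1_def vinner_vnormalize_left)
  moreover have "vinner y' y = vinner y' y'"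
    unfolding vinner_def using y y' by (intro sum.cong) (auto simp: y'_def)
  then have "vinner z1 y \<noteq> 0"
    using y' vnorm_pos[of y'] vnorm2_eq_0_iff[of y']
    by (simp add: z1_def vinner_vnormalize_left vinner_self)
  ultimately show thesis using that z1 z2 z2_0 by blast
qed

subsection \<open>Matrix-vector products and the operator norm\<close>

lemma mult_mat_vec_nth:
  assumes "A \<in> carrier_mat n n" "v \<in> carrier_vec n" "i < n"
  shows "(A *\<^sub>v v) $ i = (\<Sum>j<n. A $$ (i,j) * v $ j)"
  using assms by (auto simp: scalar_prod_def atLeast0LessThan intro!: sum.cong)

lemma mult_mat_vec_unit_vec_nth:
  assumes "(A::complex mat) \<in> carrier_mat n n" "i < n" "j < n"
  shows "(A *\<^sub>v unit_vec n j) $ i = A $$ (i,j)"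
proof -
  have "(A *\<^sub>v unit_vec n j) $ i = (\<Sum>k<n. A $$ (i,k) * unit_vec n j $ k)"
    by (rule mult_mat_vec_nth) (use assms in auto)
  also have "\<dots> = (\<Sum>k<n. if k = j then A $$ (i,j) else 0)"
    using assms by (intro sum.cong) auto
  finally show ?thesis using assms by simp
qed

lemma smult_mat_mult_vec:
  assumes "(A::complex mat) \<in> carrier_mat n n" "v \<in> carrier_vec n"
  shows "(c \<cdot>\<^sub>m A) *\<^sub>v v = c \<cdot>\<^sub>v (A *\<^sub>v v)"
  using assms by (intro eq_vecI)
    (auto simp del: index_mult_mat_vec simp: mult_mat_vec_nth[of "c \<cdot>\<^sub>m A" n] mult_mat_vec_nth[of A n]
      sum_distrib_left mult.assoc)

lemma add_smult_mat_mult_vec: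
  assumes "(A::complex mat) \<in> carrier_mat n n" "B \<in> carrier_mat n n" "v \<in> carrier_vec n"
  shows "(A + c \<cdot>\<^sub>m B) *\<^sub>v v = A *\<^sub>v v + c \<cdot>\<^sub>v (B *\<^sub>v v)"
  using assms by (simp add: add_mult_distrib_mat_vec[of _ n n] smult_mat_mult_vec)

lemma vnorm_mult_mat_vec_le_frobenius:
  assumes A: "A \<in> carrier_mat n n" and v: "v \<in> carrier_vec n"
  shows "vnorm (A *\<^sub>v v) \<le> sqrt (\<Sum>i<n. \<Sum>j<n. (cmod (A $$ (i,j)))\<^sup>2) * vnorm v"
proof -
  have row: "(cmod ((A *\<^sub>v v) $ i))\<^sup>2 \<le> (\<Sum>j<n. (cmod (A $$ (i,j)))\<^sup>2) * vnorm2 v" if i: "i < n" for i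
  proof -
    have "cmod ((A *\<^sub>v v) $ i) \<le> (\<Sum>j<n. \<bar>cmod (A $$ (i,j))\<bar> * \<bar>cmod (v $ j)\<bar>)"
      using A v i by (simp del: index_mult_mat_vec add: mult_mat_vec_nth)
        (rule order_trans[OF norm_sum], simp add: norm_mult)
    also have "\<dots> \<le> L2_set (\<lambda>j. cmod (A $$ (i,j))) {..<n} * L2_set (\<lambda>j. cmod (v $ j)) {..<n}"
      by (rule L2_set_mult_ineq)
    finally have "(cmod ((A *\<^sub>v v) $ i))\<^sup>2
        \<le> (L2_set (\<lambda>j. cmod (A $$ (i,j))) {..<n} * L2_set (\<lambda>j. cmod (v $ j)) {..<n})\<^sup>2"
      by (rule power_mono) simp
    also have "\<dots> = (\<Sum>j<n. (cmod (A $$ (i,j)))\<^sup>2) * vnorm2 v"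
      using v by (simp add: power_mult_distrib L2_set_def vnorm2_def sum_nonneg)
    finally show ?thesis .
  qed
  have "vnorm2 (A *\<^sub>v v) = (\<Sum>i<n. (cmod ((A *\<^sub>v v) $ i))\<^sup>2)"
    using A by (simp add: vnorm2_def del: index_mult_mat_vec)
  also have "\<dots> \<le> (\<Sum>i<n. (\<Sum>j<n. (cmod (A $$ (i,j)))\<^sup>2) * vnorm2 v)"
    by (intro sum_mono row) simp
  also have "\<dots> = (\<Sum>i<n. \<Sum>j<n. (cmod (A $$ (i,j)))\<^sup>2) * vnorm2 v"
    by (simp add: sum_distrib_right)
  finally show ?thesis
    by (metis real_sqrt_le_mono real_sqrt_mult vnorm_eq_sqrt_vnorm2)
qed

lemma bdd_above_opnorm_set:
  assumes "A \<in> carrier_mat n n"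
  shows "bdd_above {vnorm (A *\<^sub>v v) | v. v \<in> carrier_vec (dim_col A) \<and> vnorm v \<le> 1}"
proof (rule bdd_aboveI, safe)
  let ?C = "sqrt (\<Sum>i<n. \<Sum>j<n. (cmod (A $$ (i,j)))\<^sup>2)"
  fix v assume v: "v \<in> carrier_vec (dim_col A)" "vnorm v \<le> 1"
  have "vnorm (A *\<^sub>v v) \<le> ?C * vnorm v"
    using vnorm_mult_mat_vec_le_frobenius assms v by auto
  also have "\<dots> \<le> ?C" using v(2) by (simp add: mult_left_le sum_nonneg)
  finally show "vnorm (A *\<^sub>v v) \<le> ?C" .
qed

lemma vnorm_mult_vec_le_opnorm:
  assumes "A \<in> carrier_mat n n" "v \<in> carrier_vec n" "vnorm v \<le> 1"
  shows "vnorm (A *\<^sub>v v) \<le> opnorm A"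
  unfolding opnorm_def
proof (rule cSup_upper[OF _ bdd_above_opnorm_set[OF assms(1)]])
  have "v \<in> carrier_vec (dim_col A)" using assms(1,2) by simp
  then show "vnorm (A *\<^sub>v v) \<in> {vnorm (A *\<^sub>v v) | v. v \<in> carrier_vec (dim_col A) \<and> vnorm v \<le> 1}"
    using assms(3) by blast
qed

lemma opnorm_le:
  assumes "A \<in> carrier_mat n n"
    and "\<And>v. v \<in> carrier_vec n \<Longrightarrow> vnorm v \<le> 1 \<Longrightarrow> vnorm (A *\<^sub>v v) \<le> c"
  shows "opnorm A \<le> c"
  unfolding opnorm_def
proof (rule cSup_least)
  have "0\<^sub>v (dim_col A) \<in> carrier_vec (dim_col A)" "vnorm (0\<^sub>v (dim_col A) :: complex vec) \<le> 1"
    by (simp_all add: vnorm_def)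
  then show "{vnorm (A *\<^sub>v v) | v. v \<in> carrier_vec (dim_col A) \<and> vnorm v \<le> 1} \<noteq> {}"
    by blast
  show "\<And>r. r \<in> {vnorm (A *\<^sub>v v) | v. v \<in> carrier_vec (dim_col A) \<and> vnorm v \<le> 1} \<Longrightarrow> r \<le> c"
    using assms by auto
qed

lemma opnorm_mono_pointwise:
  assumes "A \<in> carrier_mat n n" "B \<in> carrier_mat n n"
    and "\<And>v. v \<in> carrier_vec n \<Longrightarrow> vnorm (A *\<^sub>v v) \<le> vnorm (B *\<^sub>v v)"
  shows "opnorm A \<le> opnorm B"
  by (rule opnorm_le[OF assms(1)]) (meson assms vnorm_mult_vec_le_opnorm order_trans)

lemma opnorm_nonneg: "A \<in> carrier_mat n n \<Longrightarrow> opnorm A \<ge> 0"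
  using vnorm_mult_vec_le_opnorm[of A n "0\<^sub>v n"] vnorm_nonneg[of "A *\<^sub>v 0\<^sub>v n"]
  by (simp add: vnorm_def)

lemma vnorm_mult_vec_le:
  assumes A: "A \<in> carrier_mat n n" and v: "v \<in> carrier_vec n"
  shows "vnorm (A *\<^sub>v v) \<le> opnorm A * vnorm v"
proof (cases "v = 0\<^sub>v n")
  case True
  then show ?thesis using A by (simp add: vnorm_def)
next
  case False
  then have pos: "vnorm v > 0" using vnorm_pos[of v] v by simp
  let ?u = "complex_of_real (1 / vnorm v) \<cdot>\<^sub>v v"
  have "vnorm ?u = 1" using pos by (simp add: vnorm_smult norm_divide)
  then have "vnorm (A *\<^sub>v ?u) \<le> opnorm A" using vnorm_mult_vec_le_opnorm[OF A] v by simp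
  moreover have "vnorm (A *\<^sub>v ?u) = vnorm (A *\<^sub>v v) / vnorm v"
    using A v pos by (simp add: mult_mat_vec vnorm_smult norm_divide)
  ultimately show ?thesis using pos by (simp add: divide_le_eq)
qed

lemma vnorm2_mult_vec_le:
  assumes "A \<in> carrier_mat n n" "v \<in> carrier_vec n"
  shows "vnorm2 (A *\<^sub>v v) \<le> (opnorm A)\<^sup>2 * vnorm2 v"
  using power_mono[OF vnorm_mult_vec_le[OF assms] vnorm_nonneg, of 2]
  by (simp add: power2_vnorm power_mult_distrib)

lemma compact_coordinate_ball:
  "compact {g :: nat \<Rightarrow> complex. (\<forall>i\<ge>n. g i = 0) \<and> (\<Sum>i<n. (cmod (g i))\<^sup>2) \<le> 1}"
proof -
  define S where "S = PiE UNIV (\<lambda>i::nat. if i < n then cball (0::complex) 1 else {0})"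
  have "compactin (product_topology (\<lambda>i. euclidean) UNIV) S"
    unfolding S_def by (subst compactin_PiE) (auto simp: compactin_euclidean_iff)
  then have "compact S" by (simp add: euclidean_product_topology compactin_euclidean_iff)
  moreover have "closed {g :: nat \<Rightarrow> complex. (\<Sum>i<n. (cmod (g i))\<^sup>2) \<le> 1}"
    by (intro closed_Collect_le continuous_intros continuous_on_product_coordinates)
  ultimately have "compact (S \<inter> {g. (\<Sum>i<n. (cmod (g i))\<^sup>2) \<le> 1})"
    by (rule compact_Int_closed)
  moreover have "S \<inter> {g. (\<Sum>i<n. (cmod (g i))\<^sup>2) \<le> 1}
      = {g. (\<forall>i\<ge>n. g i = 0) \<and> (\<Sum>i<n. (cmod (g i))\<^sup>2) \<le> 1}" (is "_ = ?K")
  proof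
    show "S \<inter> {g. (\<Sum>i<n. (cmod (g i))\<^sup>2) \<le> 1} \<subseteq> ?K"
    proof safe
      fix g i assume "g \<in> S" "n \<le> i"
      then have "g i \<in> (if i < n then cball 0 1 else {0})" unfolding S_def PiE_iff by blast
      then show "g i = 0" using \<open>n \<le> i\<close> by simp
    qed
    have "cmod (g i) \<le> 1" if "g \<in> ?K" "i < n" for g i
    proof -
      have "(cmod (g i))\<^sup>2 \<le> 1"
        using that member_le_sum[of i "{..<n}" "\<lambda>i. (cmod (g i))\<^sup>2"] by fastforce
      then show ?thesis by (simp add: power_le_one_iff abs_le_iff)
    qed
    then show "?K \<subseteq> S \<inter> {g. (\<Sum>i<n. (cmod (g i))\<^sup>2) \<le> 1}"
      by (auto simp: S_def PiE_iff)
  qed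
  ultimately show ?thesis by simp
qed

lemma opnorm_attained:
  assumes A: "A \<in> carrier_mat n n"
  shows "\<exists>x\<in>carrier_vec n. vnorm x \<le> 1 \<and> vnorm (A *\<^sub>v x) = opnorm A"
proof -
  define K where "K = {g :: nat \<Rightarrow> complex. (\<forall>i\<ge>n. g i = 0) \<and> (\<Sum>i<n. (cmod (g i))\<^sup>2) \<le> 1}"
  define F where "F g = sqrt (\<Sum>i<n. (cmod (\<Sum>j<n. A $$ (i,j) * g j))\<^sup>2)" for g :: "nat \<Rightarrow> complex"
  have F: "F g = vnorm (A *\<^sub>v Matrix.vec n g)" for g
    unfolding F_def vnorm_def using A by (simp del: index_mult_mat_vec add: mult_mat_vec_nth)
  have coordinate: "continuous_on K (\<lambda>g. g i)" for i
    by (rule continuous_on_subset[OF continuous_on_product_coordinates]) simp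
  have "continuous_on K F"
    unfolding F_def by (intro continuous_intros coordinate)
  moreover have "(\<lambda>_. 0) \<in> K" unfolding K_def by simp
  ultimately obtain g where g: "g \<in> K" and gmax: "\<And>h. h \<in> K \<Longrightarrow> F h \<le> F g"
    using continuous_attains_sup[OF compact_coordinate_ball[of n, folded K_def]] by blast
  have x: "Matrix.vec n g \<in> carrier_vec n" "vnorm (Matrix.vec n g) \<le> 1"
    using g by (auto simp: K_def vnorm_def)
  have "opnorm A \<le> F g"
  proof (rule opnorm_le[OF A])
    fix v :: "complex vec" assume v: "v \<in> carrier_vec n" "vnorm v \<le> 1"
    define h where "h i = (if i < n then v $ i else 0)" for i
    have "Matrix.vec n h = v" using v by (auto simp: h_def)
    moreover have "h \<in> K" using v by (auto simp: K_def h_def vnorm_def)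
    ultimately show "vnorm (A *\<^sub>v v) \<le> F g" using gmax F by metis
  qed
  then show ?thesis
    using vnorm_mult_vec_le_opnorm[OF A x] x F by (intro bexI[of _ "Matrix.vec n g"]) auto
qed

subsection \<open>Norming vectors and Birkhoff-James orthogonality\<close>

definition norming_vec :: "complex mat \<Rightarrow> complex vec \<Rightarrow> bool" where
  "norming_vec A x \<longleftrightarrow> x \<in> carrier_vec (dim_col A) \<and> vnorm x = 1 \<and> vnorm (A *\<^sub>v x) = opnorm A"

lemma norming_vecD:
  assumes "norming_vec A x" "A \<in> carrier_mat n n"
  shows "x \<in> carrier_vec n" "vnorm2 x = 1" "vnorm (A *\<^sub>v x) = opnorm A"
  using assms by (auto simp: norming_vec_def vnorm_eq_1_iff)

lemma norming_vec_exists: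
  assumes A: "A \<in> carrier_mat n n" and n: "0 < n"
  obtains x where "norming_vec A x"
proof (cases "opnorm A > 0")
  case True
  obtain x where x: "x \<in> carrier_vec n" "vnorm x \<le> 1" "vnorm (A *\<^sub>v x) = opnorm A"
    using opnorm_attained[OF A] by blast
  have "opnorm A * 1 \<le> opnorm A * vnorm x" using vnorm_mult_vec_le[OF A x(1)] x(3) by simp
  then have "vnorm x = 1" using True x(2) by (simp add: mult_le_cancel_left_pos)
  then show ?thesis using x A by (intro that) (simp add: norming_vec_def)
next
  case False
  then have "opnorm A = 0" using opnorm_nonneg[OF A] by simp
  moreover have e: "unit_vec n 0 \<in> carrier_vec n" "vnorm (unit_vec n 0 :: complex vec) = 1"
    using n by (simp_all add: vnorm_eq_1_iff vnorm2_unit_vec)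
  ultimately have "vnorm (A *\<^sub>v unit_vec n 0) = opnorm A"
    using vnorm_mult_vec_le_opnorm[OF A e(1)] vnorm_nonneg[of "A *\<^sub>v unit_vec n 0"] by simp
  then show ?thesis using e A by (intro that[of "unit_vec n 0"]) (simp add: norming_vec_def)
qed

lemma bj_orth_if_norming_vec_orth:
  assumes A: "A \<in> carrier_mat n n" and B: "B \<in> carrier_mat n n"
    and x: "norming_vec A x" and orth: "vinner (A *\<^sub>v x) (B *\<^sub>v x) = 0"
  shows "bj_orth A B"
  unfolding bj_orth_def
proof
  fix c :: complex
  note x = norming_vecD[OF x A]
  have "vnorm2 ((A + c \<cdot>\<^sub>m B) *\<^sub>v x) = vnorm2 (A *\<^sub>v x) + (cmod c)\<^sup>2 * vnorm2 (B *\<^sub>v x)"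
    using A B x orth
    by (simp add: add_smult_mat_mult_vec vnorm2_add_orth vinner_smult_right vnorm2_smult)
  then have "vnorm (A *\<^sub>v x) \<le> vnorm ((A + c \<cdot>\<^sub>m B) *\<^sub>v x)"
    using vnorm2_nonneg[of "B *\<^sub>v x"] by (simp add: vnorm_eq_sqrt_vnorm2)
  also have "\<dots> \<le> opnorm (A + c \<cdot>\<^sub>m B)"
    using A B x by (intro vnorm_mult_vec_le_opnorm[of _ n]) (auto simp: vnorm_le_1_iff)
  finally show "opnorm A \<le> opnorm (A + c \<cdot>\<^sub>m B)" using x(3) by simp
qed

text \<open>Moving a norming vector \<open>x\<close> in a direction \<open>w \<perp> x\<close> changes \<open>vnorm2 x\<close> only to
  second order, so \<open>vnorm2 (A x)\<close> may not grow to first order.\<close>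

lemma norming_vec_variation:
  fixes t :: real
  assumes A: "A \<in> carrier_mat n n" and x: "norming_vec A x"
    and w: "w \<in> carrier_vec n" "vinner w x = 0"
  defines "a \<equiv> vinner (A *\<^sub>v w) (A *\<^sub>v x)"
  shows "2 * t * (cmod a)\<^sup>2 \<le> t\<^sup>2 * (cmod a)\<^sup>2 * ((opnorm A)\<^sup>2 * vnorm2 w)"
proof -
  note x = norming_vecD[OF x A]
  define c where "c = complex_of_real t * cnj a"
  have c: "(cmod c)\<^sup>2 = t\<^sup>2 * (cmod a)\<^sup>2"
    unfolding c_def by (simp add: norm_mult power_mult_distrib)
  have "vinner x w = 0" by (rule vinner_eq_0_commute) (use x w in simp_all)
  then have v: "vnorm2 (x + c \<cdot>\<^sub>v w) = 1 + (cmod c)\<^sup>2 * vnorm2 w"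
    using x w by (simp add: vnorm2_add_smult)
  have "cnj c * vinner (A *\<^sub>v x) (A *\<^sub>v w) = complex_of_real t * (a * cnj a)"
    unfolding c_def a_def using A x w by (simp add: vinner_commute[of "A *\<^sub>v x"])
  then have cross: "Re (cnj c * vinner (A *\<^sub>v x) (A *\<^sub>v w)) = t * (cmod a)\<^sup>2"
    by (simp flip: complex_norm_square)
  have "A *\<^sub>v (x + c \<cdot>\<^sub>v w) = A *\<^sub>v x + c \<cdot>\<^sub>v (A *\<^sub>v w)"
    using A x w by (simp add: mult_add_distrib_mat_vec[of _ n n] mult_mat_vec)
  moreover have "vnorm2 (A *\<^sub>v x + c \<cdot>\<^sub>v (A *\<^sub>v w))
      = vnorm2 (A *\<^sub>v x) + (cmod c)\<^sup>2 * vnorm2 (A *\<^sub>v w) + 2 * Re (cnj c * vinner (A *\<^sub>v x) (A *\<^sub>v w))"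
    by (rule vnorm2_add_smult) (use A in simp)
  ultimately have "vnorm2 (A *\<^sub>v (x + c \<cdot>\<^sub>v w))
      = (opnorm A)\<^sup>2 + (cmod c)\<^sup>2 * vnorm2 (A *\<^sub>v w) + 2 * (t * (cmod a)\<^sup>2)"
    unfolding cross using x(3) power2_vnorm[of "A *\<^sub>v x"] by simp
  moreover have "vnorm2 (A *\<^sub>v (x + c \<cdot>\<^sub>v w)) \<le> (opnorm A)\<^sup>2 * vnorm2 (x + c \<cdot>\<^sub>v w)"
    using A x w by (intro vnorm2_mult_vec_le) auto
  ultimately have "2 * t * (cmod a)\<^sup>2
      \<le> (cmod c)\<^sup>2 * ((opnorm A)\<^sup>2 * vnorm2 w) - (cmod c)\<^sup>2 * vnorm2 (A *\<^sub>v w)"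
    unfolding v by (simp add: algebra_simps)
  moreover have "(cmod c)\<^sup>2 * vnorm2 (A *\<^sub>v w) \<ge> 0" by (simp add: vnorm2_nonneg)
  ultimately show ?thesis unfolding c[symmetric] by linarith
qed

lemma norming_vec_orth_image:
  assumes A: "A \<in> carrier_mat n n" and x: "norming_vec A x"
    and w: "w \<in> carrier_vec n" "vinner w x = 0"
  shows "vinner (A *\<^sub>v w) (A *\<^sub>v x) = 0"
proof (rule ccontr)
  define a P where "a = vinner (A *\<^sub>v w) (A *\<^sub>v x)" and "P = (opnorm A)\<^sup>2 * vnorm2 w"
  assume "vinner (A *\<^sub>v w) (A *\<^sub>v x) \<noteq> 0"
  then have a: "t * (cmod a)\<^sup>2 > 0" if "t > 0" for t :: real using that by (simp add: a_def)
  have P: "P \<ge> 0" unfolding P_def using vnorm2_nonneg[of w] by simp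
  define t where "t = 1 / (P + 1)"
  have t: "t > 0" "t * P < 1" unfolding t_def using P by (simp_all add: field_simps)
  have "(t * (cmod a)\<^sup>2) * 2 \<le> (t * (cmod a)\<^sup>2) * (t * P)"
    using norming_vec_variation[OF A x w, of t] by (simp add: a_def P_def power2_eq_square mult_ac)
  then have "2 \<le> t * P" using a[OF t(1)] by (simp add: mult_le_cancel_left_pos)
  then show False using t by simp
qed

text \<open>For unit \<open>v\<close>, \<open>vnorm2 v - (cmod (vinner v w))\<^sup>2\<close> is the squared distance of \<open>v\<close> from the line
  through the unit vector \<open>w\<close>; so \<open>norm_gap B w \<delta>\<close> says that \<open>w\<close> is, up to a phase, the only
  norming vector of \<open>B\<close>, in a quantitative way.\<close>

definition norm_gap :: "complex mat \<Rightarrow> complex vec \<Rightarrow> real \<Rightarrow> bool" where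
  "norm_gap B w \<delta> \<longleftrightarrow> (\<forall>v\<in>carrier_vec (dim_col B).
     vnorm2 (B *\<^sub>v v) \<le> vnorm2 (B *\<^sub>v w) * vnorm2 v - \<delta> * (vnorm2 v - (cmod (vinner v w))\<^sup>2))"

lemma norm_gap_cross_term:
  assumes A: "A \<in> carrier_mat n n" and B: "B \<in> carrier_mat n n"
    and w: "w \<in> carrier_vec n" "vnorm w = 1" and r: "r \<in> carrier_vec n" "vnorm r \<le> 1"
    and \<alpha>: "cmod \<alpha> \<le> 1" and Br: "vnorm (B *\<^sub>v r) \<le> vnorm (B *\<^sub>v w) * vnorm r"
  shows "cmod (vinner (B *\<^sub>v (\<alpha> \<cdot>\<^sub>v w + r)) (A *\<^sub>v (\<alpha> \<cdot>\<^sub>v w + r))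
      - \<alpha> * cnj \<alpha> * vinner (B *\<^sub>v w) (A *\<^sub>v w)) \<le> 3 * (vnorm (B *\<^sub>v w) * opnorm A * vnorm r)"
proof -
  define s k \<rho> where "s = vnorm (B *\<^sub>v w)" and "k = opnorm A" and "\<rho> = vnorm r"
  have nonneg: "s \<ge> 0" "k \<ge> 0" "\<rho> \<ge> 0"
    unfolding s_def k_def \<rho>_def using opnorm_nonneg[OF A] by (simp_all add: vnorm_nonneg)
  have Aw: "vnorm (A *\<^sub>v w) \<le> k" and Ar: "vnorm (A *\<^sub>v r) \<le> k * \<rho>"
    using vnorm_mult_vec_le[OF A w(1)] vnorm_mult_vec_le[OF A r(1)] w(2) by (simp_all add: k_def \<rho>_def)
  have mult: "M *\<^sub>v (\<alpha> \<cdot>\<^sub>v w + r) = \<alpha> \<cdot>\<^sub>v (M *\<^sub>v w) + M *\<^sub>v r" if "M \<in> carrier_mat n n" for M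
    using that w r by (simp add: mult_add_distrib_mat_vec[of _ n n] mult_mat_vec)
  have "vinner (B *\<^sub>v (\<alpha> \<cdot>\<^sub>v w + r)) (A *\<^sub>v (\<alpha> \<cdot>\<^sub>v w + r)) - \<alpha> * cnj \<alpha> * vinner (B *\<^sub>v w) (A *\<^sub>v w)
      = \<alpha> * vinner (B *\<^sub>v w) (A *\<^sub>v r) + cnj \<alpha> * vinner (B *\<^sub>v r) (A *\<^sub>v w) + vinner (B *\<^sub>v r) (A *\<^sub>v r)"
    using A B w r
    by (simp add: mult mult_mat_vec vinner_add_left vinner_add_right vinner_smult_left vinner_smult_right
        algebra_simps)
  also have "cmod \<dots> \<le> cmod (vinner (B *\<^sub>v w) (A *\<^sub>v r)) + cmod (vinner (B *\<^sub>v r) (A *\<^sub>v w))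
      + cmod (vinner (B *\<^sub>v r) (A *\<^sub>v r))"
    using \<alpha> by (intro norm_triangle_le add_mono order_trans[OF norm_triangle_ineq])
      (auto simp: norm_mult intro: mult_left_le_one_le)
  also have "\<dots> \<le> s * (k * \<rho>) + (s * \<rho>) * k + (s * \<rho>) * (k * \<rho>)"
    using A B w r Aw Ar Br nonneg unfolding s_def[symmetric] \<rho>_def[symmetric]
    by (intro add_mono order_trans[OF vinner_cauchy_schwarz] mult_mono)
      (simp_all add: vnorm_nonneg s_def)
  also have "(s * \<rho>) * (k * \<rho>) \<le> s * k * \<rho>"
  proof -
    have "(s * k * \<rho>) * \<rho> \<le> s * k * \<rho>" using r(2) nonneg by (intro mult_left_le) (simp_all add: \<rho>_def)
    then show ?thesis by (simp add: mult_ac)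
  qed
  finally show ?thesis by (simp add: s_def k_def \<rho>_def algebra_simps)
qed

lemma norm_gap_arith:
  fixes s \<delta> t c k a \<rho> :: real
  assumes "\<delta> > 0" "t > 0" "\<rho> \<ge> 0" "a + \<rho>\<^sup>2 \<le> 1"
    and "4 * t * c \<le> \<delta>" "2 * t * c \<le> s\<^sup>2" "t * (k\<^sup>2 + 18 * s\<^sup>2 * k\<^sup>2 / \<delta>) \<le> c"
  shows "s\<^sup>2 * (a + \<rho>\<^sup>2) - \<delta> * \<rho>\<^sup>2 - 2 * t * c * a + 6 * t * s * k * \<rho> + t\<^sup>2 * k\<^sup>2 \<le> s\<^sup>2 - t * c"
proof -
  have am_gm: "6 * t * s * k * \<rho> \<le> \<delta> / 2 * \<rho>\<^sup>2 + 18 * t\<^sup>2 * s\<^sup>2 * k\<^sup>2 / \<delta>"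
  proof -
    have "0 \<le> \<delta> / 2 * (\<rho> - 6 * t * s * k / \<delta>)\<^sup>2" using assms(1) by simp
    also have "\<dots> = \<delta> / 2 * \<rho>\<^sup>2 - 6 * t * s * k * \<rho> + 18 * t\<^sup>2 * s\<^sup>2 * k\<^sup>2 / \<delta>"
      using assms(1) by (simp add: field_simps power2_eq_square)
    finally show ?thesis by simp
  qed
  have "(s\<^sup>2 - 2 * t * c) * (a + \<rho>\<^sup>2) \<le> (s\<^sup>2 - 2 * t * c) * 1"
    using assms(4,6) by (intro mult_left_mono) simp_all
  moreover have "(2 * t * c - \<delta> / 2) * \<rho>\<^sup>2 \<le> 0"
    using assms(5) by (intro mult_nonpos_nonneg) simp_all
  moreover have "t * (t * (k\<^sup>2 + 18 * s\<^sup>2 * k\<^sup>2 / \<delta>)) \<le> t * c"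
    using assms(2,7) by (intro mult_left_mono) simp_all
  ultimately show ?thesis
    using am_gm by (simp add: algebra_simps power2_eq_square add_divide_distrib)
qed

lemma norm_gap_orth_le:
  assumes B: "B \<in> carrier_mat n n" and gap: "norm_gap B w \<delta>" and \<delta>: "\<delta> \<ge> 0"
    and r: "r \<in> carrier_vec n" "vinner r w = 0"
  shows "vnorm (B *\<^sub>v r) \<le> vnorm (B *\<^sub>v w) * vnorm r"
proof -
  have "vnorm2 (B *\<^sub>v r) \<le> vnorm2 (B *\<^sub>v w) * vnorm2 r - \<delta> * vnorm2 r"
    using gap r B by (auto simp: norm_gap_def)
  then have "vnorm2 (B *\<^sub>v r) \<le> vnorm2 (B *\<^sub>v w) * vnorm2 r"
    using \<delta> vnorm2_nonneg[of r] mult_nonneg_nonneg[of \<delta> "vnorm2 r"] by linarith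
  then have "vnorm2 (B *\<^sub>v r) \<le> (vnorm (B *\<^sub>v w) * vnorm r)\<^sup>2"
    by (simp add: power2_vnorm power_mult_distrib)
  then show ?thesis
    by (metis power2_vnorm vnorm_nonneg mult_nonneg_nonneg power2_le_imp_le)
qed

lemma Re_cnj_mult_le:
  fixes l c \<alpha> z :: complex
  assumes l: "cmod l = t" "cnj l * c = - complex_of_real (t * cmod c)"
    and z: "cmod (z - \<alpha> * cnj \<alpha> * c) \<le> e"
  shows "Re (cnj l * z) \<le> - t * cmod c * (cmod \<alpha>)\<^sup>2 + t * e"
proof -
  have "cnj l * c * (\<alpha> * cnj \<alpha>) = - complex_of_real (t * cmod c * (cmod \<alpha>)\<^sup>2)"
    unfolding l(2) complex_norm_square[symmetric] by simp
  then have "Re (cnj l * z) = - t * cmod c * (cmod \<alpha>)\<^sup>2 + Re (cnj l * (z - \<alpha> * cnj \<alpha> * c))"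
    by (simp add: algebra_simps)
  also have "Re (cnj l * (z - \<alpha> * cnj \<alpha> * c)) \<le> t * cmod (z - \<alpha> * cnj \<alpha> * c)"
    using complex_Re_le_cmod[of "cnj l * (z - \<alpha> * cnj \<alpha> * c)"] by (simp add: norm_mult l(1))
  also have "\<dots> \<le> t * e"
    using z l(1) by (intro mult_left_mono) auto
  finally show ?thesis by simp
qed

text \<open>With a norm gap at \<open>w\<close>, the first-order loss \<open>t \<bar>c\<bar>\<close> of \<open>B + l A\<close> at \<open>w\<close> is not
  compensated anywhere on the unit ball: vectors with a large component orthogonal to \<open>w\<close>
  are already shorter by the gap.\<close>

lemma norm_gap_perturbation:
  fixes A B :: "complex mat" and w :: "complex vec"
  defines "c \<equiv> vinner (B *\<^sub>v w) (A *\<^sub>v w)"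
  assumes A: "A \<in> carrier_mat n n" and B: "B \<in> carrier_mat n n"
    and w: "w \<in> carrier_vec n" "vnorm2 w = 1" and \<delta>: "\<delta> > 0" and gap: "norm_gap B w \<delta>"
    and v: "v \<in> carrier_vec n" "vnorm v \<le> 1"
    and t: "t > 0" and l: "cmod l = t" "cnj l * c = - complex_of_real (t * cmod c)"
    and small: "4 * t * cmod c \<le> \<delta>" "2 * t * cmod c \<le> vnorm2 (B *\<^sub>v w)"
      "t * ((opnorm A)\<^sup>2 + 18 * vnorm2 (B *\<^sub>v w) * (opnorm A)\<^sup>2 / \<delta>) \<le> cmod c"
  shows "vnorm2 ((B + l \<cdot>\<^sub>m A) *\<^sub>v v) \<le> vnorm2 (B *\<^sub>v w) - t * cmod c"
proof -
  define s k where "s = vnorm (B *\<^sub>v w)" and "k = opnorm A"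
  have s: "vnorm2 (B *\<^sub>v w) = s\<^sup>2" unfolding s_def by (simp add: power2_vnorm)
  obtain r where r: "r \<in> carrier_vec n" "v = vinner v w \<cdot>\<^sub>v w + r" "vinner r w = 0"
    and v_split: "vnorm2 v = (cmod (vinner v w))\<^sup>2 + vnorm2 r"
    using vec_orth_decomp[OF v(1) w] .
  define \<alpha> \<rho> where "\<alpha> = vinner v w" and "\<rho> = vnorm r"
  have v2: "vnorm2 v = (cmod \<alpha>)\<^sup>2 + \<rho>\<^sup>2" "vnorm2 v \<le> 1"
    using v_split v(2) by (simp_all add: \<alpha>_def \<rho>_def power2_vnorm vnorm_le_1_iff)
  have "\<rho>\<^sup>2 \<le> 1" "(cmod \<alpha>)\<^sup>2 \<le> 1"
    using v2 zero_le_power2[of \<rho>] zero_le_power2[of "cmod \<alpha>"] by linarith+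
  then have \<rho>: "\<rho> \<ge> 0" "\<rho> \<le> 1" and \<alpha>: "cmod \<alpha> \<le> 1"
    unfolding \<rho>_def abs_square_le_1 by (simp_all add: vnorm_nonneg)
  have Bv: "vnorm2 (B *\<^sub>v v) \<le> s\<^sup>2 * vnorm2 v - \<delta> * \<rho>\<^sup>2"
    using gap v B v2 by (auto simp: norm_gap_def s \<alpha>_def)
  have Av: "t\<^sup>2 * vnorm2 (A *\<^sub>v v) \<le> t\<^sup>2 * k\<^sup>2"
    using vnorm2_mult_vec_le[OF A v(1)] v2 mult_left_le[of "vnorm2 v" "k\<^sup>2"]
    by (simp add: k_def mult_left_mono)
  have "cmod (vinner (B *\<^sub>v v) (A *\<^sub>v v) - \<alpha> * cnj \<alpha> * c) \<le> 3 * (s * k * \<rho>)"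
    using norm_gap_cross_term[OF A B w(1) _ r(1) _ \<alpha>] norm_gap_orth_le[OF B gap _ r(1,3)] \<delta> w(2) \<rho> r(2)
    by (simp add: c_def s_def k_def \<alpha>_def \<rho>_def vnorm_eq_1_iff)
  from Re_cnj_mult_le[OF l this]
  have cross: "2 * Re (cnj l * vinner (B *\<^sub>v v) (A *\<^sub>v v))
      \<le> - 2 * t * cmod c * (cmod \<alpha>)\<^sup>2 + 6 * t * s * k * \<rho>" by simp
  have "vnorm2 ((B + l \<cdot>\<^sub>m A) *\<^sub>v v)
      = vnorm2 (B *\<^sub>v v) + t\<^sup>2 * vnorm2 (A *\<^sub>v v) + 2 * Re (cnj l * vinner (B *\<^sub>v v) (A *\<^sub>v v))"
    using A B v by (simp add: add_smult_mat_mult_vec vnorm2_add_smult l(1))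
  also have "\<dots> \<le> s\<^sup>2 * ((cmod \<alpha>)\<^sup>2 + \<rho>\<^sup>2) - \<delta> * \<rho>\<^sup>2 - 2 * t * cmod c * (cmod \<alpha>)\<^sup>2
      + 6 * t * s * k * \<rho> + t\<^sup>2 * k\<^sup>2"
    using Bv Av cross unfolding v2(1) by linarith
  also have "\<dots> \<le> s\<^sup>2 - t * cmod c"
    using norm_gap_arith[OF \<delta> t \<rho>(1) _ small(1)] small(2,3) v2 s by (simp add: k_def)
  finally show ?thesis using s by simp
qed

lemma exists_small_step:
  fixes c \<delta> S M :: real
  assumes "c > 0" "\<delta> > 0" "S > 0" "M \<ge> 0"
  obtains t where "t > 0" "4 * t * c \<le> \<delta>" "2 * t * c \<le> S" "t * M \<le> c"
proof
  define t where "t = min (\<delta> / (4 * c)) (min (S / (2 * c)) (c / (M + 1)))"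
  show "t > 0" unfolding t_def using assms by simp
  have "t \<le> \<delta> / (4 * c)" "t \<le> S / (2 * c)" "t \<le> c / (M + 1)"
    unfolding t_def by simp_all
  then have "t * (4 * c) \<le> \<delta>" "t * (2 * c) \<le> S" "t * (M + 1) \<le> c"
    using assms by (simp_all add: pos_le_divide_eq)
  then show "4 * t * c \<le> \<delta>" "2 * t * c \<le> S" "t * M \<le> c"
    using assms \<open>t > 0\<close> by (simp_all add: algebra_simps)
qed

lemma exists_opposite_phase:
  assumes "c \<noteq> 0" "t \<ge> 0"
  obtains l where "cmod l = t" "cnj l * c = - complex_of_real (t * cmod c)"
proof
  define l where "l = - (complex_of_real t * c / complex_of_real (cmod c))"
  have "cnj c * c = complex_of_real (cmod c) * complex_of_real (cmod c)"
    using complex_norm_square[of c] by (simp add: power2_eq_square mult.commute)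
  then show "cmod l = t" "cnj l * c = - complex_of_real (t * cmod c)"
    unfolding l_def using assms by (simp_all add: norm_mult norm_divide mult.assoc)
qed

lemma not_bj_orth_if_norm_gap:
  assumes B: "B \<in> carrier_mat n n" and A: "A \<in> carrier_mat n n"
    and w: "w \<in> carrier_vec n" "vnorm2 w = 1" and \<delta>: "\<delta> > 0" and gap: "norm_gap B w \<delta>"
    and c: "vinner (B *\<^sub>v w) (A *\<^sub>v w) \<noteq> 0"
  shows "\<not> bj_orth B A"
proof
  assume orth: "bj_orth B A"
  define c S M where "c = vinner (B *\<^sub>v w) (A *\<^sub>v w)" and "S = vnorm2 (B *\<^sub>v w)"
    and "M = (opnorm A)\<^sup>2 + 18 * vnorm2 (B *\<^sub>v w) * (opnorm A)\<^sup>2 / \<delta>"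
  have cc: "cmod c > 0" using c by (simp add: c_def)
  have "cmod c \<le> vnorm (B *\<^sub>v w) * vnorm (A *\<^sub>v w)"
    unfolding c_def by (rule vinner_cauchy_schwarz) (use A B in simp)
  then have "vnorm (B *\<^sub>v w) \<noteq> 0" using cc by auto
  then have S: "S > 0" unfolding S_def power2_vnorm[symmetric] by simp
  have M: "M \<ge> 0" unfolding M_def using \<delta> vnorm2_nonneg[of "B *\<^sub>v w"] by simp
  obtain t where t: "t > 0" and small: "4 * t * cmod c \<le> \<delta>" "2 * t * cmod c \<le> S" "t * M \<le> cmod c"
    using exists_small_step[OF cc \<delta> S M] .
  obtain l where l: "cmod l = t" "cnj l * c = - complex_of_real (t * cmod c)"
    using exists_opposite_phase[of c t] cc t by auto
  have "opnorm (B + l \<cdot>\<^sub>m A) \<le> sqrt (S - t * cmod c)"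
  proof (rule opnorm_le)
    fix v assume "v \<in> carrier_vec n" "vnorm v \<le> 1"
    with norm_gap_perturbation[OF A B w \<delta> gap this t l[unfolded c_def]
      small[unfolded c_def S_def M_def]]
    show "vnorm ((B + l \<cdot>\<^sub>m A) *\<^sub>v v) \<le> sqrt (S - t * cmod c)"
      by (simp add: vnorm_eq_sqrt_vnorm2 c_def S_def)
  qed (use A B in simp)
  also have "\<dots> < sqrt S" using t cc by simp
  also have "sqrt S = vnorm (B *\<^sub>v w)" by (simp add: S_def vnorm_eq_sqrt_vnorm2)
  also have "\<dots> \<le> opnorm B" using B w by (intro vnorm_mult_vec_le_opnorm) (simp_all add: vnorm_le_1_iff)
  finally show False using orth unfolding bj_orth_def by (meson not_le)
qed

subsection \<open>Probe matrices\<close>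

definition outer_prod :: "complex vec \<Rightarrow> complex vec \<Rightarrow> complex mat" where
  "outer_prod z w = Matrix.mat (dim_vec z) (dim_vec w) (\<lambda>(i,j). z $ i * cnj (w $ j))"

lemma outer_prod_carrier [simp]:
  "z \<in> carrier_vec n \<Longrightarrow> w \<in> carrier_vec n \<Longrightarrow> outer_prod z w \<in> carrier_mat n n"
  unfolding outer_prod_def by simp

lemma dim_outer_prod [simp]:
  "dim_row (outer_prod z w) = dim_vec z" "dim_col (outer_prod z w) = dim_vec w"
  unfolding outer_prod_def by simp_all

lemma outer_prod_index:
  "z \<in> carrier_vec n \<Longrightarrow> w \<in> carrier_vec n \<Longrightarrow> i < n \<Longrightarrow> j < n \<Longrightarrow>
    outer_prod z w $$ (i,j) = z $ i * cnj (w $ j)"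
  unfolding outer_prod_def by simp

lemma outer_prod_mult_vec:
  assumes z: "z \<in> carrier_vec n" and w: "w \<in> carrier_vec n" and v: "v \<in> carrier_vec n"
  shows "outer_prod z w *\<^sub>v v = vinner v w \<cdot>\<^sub>v z"
proof (rule eq_vecI)
  fix i assume "i < dim_vec (vinner v w \<cdot>\<^sub>v z)"
  then have i: "i < n" using z by simp
  have "(outer_prod z w *\<^sub>v v) $ i = (\<Sum>j<n. outer_prod z w $$ (i,j) * v $ j)"
    by (rule mult_mat_vec_nth[OF outer_prod_carrier[OF z w] v i])
  also have "\<dots> = (\<Sum>j<n. z $ i * (v $ j * cnj (w $ j)))"
    using z w i by (intro sum.cong) (simp_all add: outer_prod_index)
  also have "\<dots> = z $ i * vinner v w" using v unfolding vinner_def by (simp add: sum_distrib_left)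
  finally show "(outer_prod z w *\<^sub>v v) $ i = (vinner v w \<cdot>\<^sub>v z) $ i" using i z by simp
qed (use z w in \<open>simp add: outer_prod_def\<close>)

lemma norm_gap_outer_prod:
  assumes z: "z \<in> carrier_vec n" and w: "w \<in> carrier_vec n" "vnorm2 w = 1"
  shows "norm_gap (outer_prod z w) w (vnorm2 z)"
proof -
  have "vinner w w = 1" using w(2) by (simp add: vinner_self)
  then show ?thesis
    using z w by (auto simp: norm_gap_def outer_prod_mult_vec vnorm2_smult algebra_simps)
qed

lemma left_symmetric_outer_prod_orth:
  assumes ls: "left_symmetric V A" and V: "V \<subseteq> carrier_mat n n" and x: "norming_vec A x"
    and w: "w \<in> carrier_vec n" "vnorm2 w = 1" "vinner x w = 0"
    and z: "z \<in> carrier_vec n" and zw: "outer_prod z w \<in> V"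
  shows "vinner z (A *\<^sub>v w) = 0"
proof (rule ccontr)
  assume nonzero: "vinner z (A *\<^sub>v w) \<noteq> 0"
  define B where "B = outer_prod z w"
  have A: "A \<in> carrier_mat n n" using ls V by (auto simp: left_symmetric_def)
  have B: "B \<in> carrier_mat n n" unfolding B_def using z w by simp
  note x = norming_vecD[OF x A]
  have "vinner (A *\<^sub>v x) (B *\<^sub>v x) = 0"
    unfolding B_def using A z w x by (simp add: outer_prod_mult_vec vinner_smult_right)
  then have "bj_orth A B" by (rule bj_orth_if_norming_vec_orth[OF A B \<open>norming_vec A x\<close>])
  then have "bj_orth B A" using ls zw unfolding left_symmetric_def B_def by blast
  moreover have "z \<noteq> 0\<^sub>v n" using nonzero by (auto simp: vinner_def)
  then have "vnorm2 z > 0" using z vnorm2_eq_0_iff[of z] vnorm2_nonneg[of z] by simp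
  moreover have "B *\<^sub>v w = z" using z w by (simp add: B_def outer_prod_mult_vec vinner_self)
  ultimately show False
    using not_bj_orth_if_norm_gap[OF B A w(1,2) _
        norm_gap_outer_prod[OF z w(1,2), folded B_def]] nonzero
    by simp
qed

text \<open>The probe maps \<open>x \<mapsto> 4 z\<^sub>2\<close> and \<open>m \<mapsto> 5 z\<^sub>1 + 3 z\<^sub>2\<close>. On \<open>span {x, m}\<close> its Gram matrix
  \<open>[[16, 12], [12, 34]]\<close> has the eigenvalues \<open>40\<close> and \<open>10\<close>, with top eigenvector \<open>x + 2 m\<close>;
  this is where the norm gap \<open>30\<close> below comes from.\<close>

definition rank_two_probe ::
  "complex vec \<Rightarrow> complex vec \<Rightarrow> complex vec \<Rightarrow> complex vec \<Rightarrow> complex mat"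
  where "rank_two_probe z1 z2 x m = outer_prod (5 \<cdot>\<^sub>v z1) m + outer_prod z2 (4 \<cdot>\<^sub>v x + 3 \<cdot>\<^sub>v m)"

lemma rank_two_probe_carrier:
  "z1 \<in> carrier_vec n \<Longrightarrow> z2 \<in> carrier_vec n \<Longrightarrow> x \<in> carrier_vec n \<Longrightarrow> m \<in> carrier_vec n \<Longrightarrow>
    rank_two_probe z1 z2 x m \<in> carrier_mat n n"
  unfolding rank_two_probe_def by simp

lemma rank_two_probe_index:
  assumes "z1 \<in> carrier_vec n" "z2 \<in> carrier_vec n" "x \<in> carrier_vec n" "m \<in> carrier_vec n"
    and "i < n" "j < n"
  shows "rank_two_probe z1 z2 x m $$ (i,j)
    = 5 * z1 $ i * cnj (m $ j) + z2 $ i * cnj (4 * x $ j + 3 * m $ j)"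
  using assms by (simp add: rank_two_probe_def outer_prod_index)

context
  fixes n :: nat and z1 z2 x m :: "complex vec"
  assumes z: "z1 \<in> carrier_vec n" "vnorm2 z1 = 1" "z2 \<in> carrier_vec n" "vnorm2 z2 = 1"
    "vinner z1 z2 = 0"
    and xm: "x \<in> carrier_vec n" "vnorm2 x = 1" "m \<in> carrier_vec n" "vnorm2 m = 1"
    "vinner x m = 0"
begin

lemma rank_two_probe_mult_vec:
  assumes v: "v \<in> carrier_vec n"
  shows "rank_two_probe z1 z2 x m *\<^sub>v v
    = (5 * vinner v m) \<cdot>\<^sub>v z1 + (4 * vinner v x + 3 * vinner v m) \<cdot>\<^sub>v z2"
proof -
  have "vinner v (4 \<cdot>\<^sub>v x + 3 \<cdot>\<^sub>v m) = 4 * vinner v x + 3 * vinner v m"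
    using v xm by (simp add: vinner_add_right vinner_smult_right)
  then show ?thesis
    unfolding rank_two_probe_def using z xm v
    by (simp add: add_mult_distrib_mat_vec[of _ n n] outer_prod_mult_vec)
      (intro eq_vecI, auto simp: algebra_simps)
qed

definition probe_top :: "complex vec" where
  "probe_top = complex_of_real (1 / sqrt 5) \<cdot>\<^sub>v (x + 2 \<cdot>\<^sub>v m)"

lemma probe_top_carrier: "probe_top \<in> carrier_vec n"
  unfolding probe_top_def using xm by simp

lemma vinner_probe_top:
  assumes "v \<in> carrier_vec n"
  shows "vinner v probe_top = complex_of_real (1 / sqrt 5) * (vinner v x + 2 * vinner v m)"
  unfolding probe_top_def using assms xm by (simp add: vinner_smult_right vinner_add_right)

lemma vnorm2_probe_top: "vnorm2 probe_top = 1"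
  using vnorm2_orthonormal_comb[OF xm(1,2,3,4,5), of 1 2] xm
  by (simp add: probe_top_def vnorm2_smult norm_divide power_divide)

lemma rank_two_probe_top:
  "rank_two_probe z1 z2 x m *\<^sub>v probe_top = complex_of_real (2 * sqrt 5) \<cdot>\<^sub>v (z1 + z2)"
proof -
  have "vinner x x = 1" "vinner m m = 1" "vinner m x = 0"
    using xm vinner_eq_0_commute[of m x] by (simp_all add: vinner_self)
  then have "vinner probe_top x = complex_of_real (1 / sqrt 5)"
    "vinner probe_top m = complex_of_real (2 / sqrt 5)"
    unfolding probe_top_def using xm by (simp_all add: vinner_smult_left vinner_add_left)
  moreover have "(10::real) / sqrt 5 = 2 * sqrt 5"
    by (simp add: field_simps)
  then have "10 / complex_of_real (sqrt 5) = 2 * complex_of_real (sqrt 5)"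
    by (metis of_real_divide of_real_mult of_real_numeral)
  ultimately show ?thesis
    using z probe_top_carrier by (simp add: rank_two_probe_mult_vec smult_add_distrib_vec)
qed

lemma vnorm2_rank_two_probe_top: "vnorm2 (rank_two_probe z1 z2 x m *\<^sub>v probe_top) = 40"
  using vnorm2_orthonormal_comb[OF z, of "complex_of_real (2 * sqrt 5)"
      "complex_of_real (2 * sqrt 5)"] z
  by (simp add: rank_two_probe_top smult_add_distrib_vec power_mult_distrib)

lemma norm_gap_rank_two_probe: "norm_gap (rank_two_probe z1 z2 x m) probe_top 30"
  unfolding norm_gap_def
proof
  fix v :: "complex vec"
  assume "v \<in> carrier_vec (dim_col (rank_two_probe z1 z2 x m))"
  then have v: "v \<in> carrier_vec n" using rank_two_probe_carrier[OF z(1,3) xm(1,3)] by simp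
  define a b where "a = vinner v x" and "b = vinner v m"
  have "vnorm2 (rank_two_probe z1 z2 x m *\<^sub>v v) = (cmod (5 * b))\<^sup>2 + (cmod (4 * a + 3 * b))\<^sup>2"
    using v by (simp add: rank_two_probe_mult_vec vnorm2_orthonormal_comb[OF z] a_def b_def)
  also have "\<dots> = 10 * ((cmod a)\<^sup>2 + (cmod b)\<^sup>2) + 6 * (cmod (a + 2 * b))\<^sup>2"
    unfolding cmod_power2 by (simp add: power2_eq_square algebra_simps)
  also have "6 * (cmod (a + 2 * b))\<^sup>2 = 30 * (cmod (vinner v probe_top))\<^sup>2"
    using v by (simp add: vinner_probe_top a_def b_def norm_mult norm_divide power_divide)
  also have "10 * ((cmod a)\<^sup>2 + (cmod b)\<^sup>2) + 30 * (cmod (vinner v probe_top))\<^sup>2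
      \<le> 10 * vnorm2 v + 30 * (cmod (vinner v probe_top))\<^sup>2"
    using vinner_orthonormal_bessel[OF v xm] unfolding a_def b_def by (intro add_right_mono) simp
  also have "\<dots> = vnorm2 (rank_two_probe z1 z2 x m *\<^sub>v probe_top) * vnorm2 v
      - 30 * (vnorm2 v - (cmod (vinner v probe_top))\<^sup>2)"
    by (simp add: vnorm2_rank_two_probe_top algebra_simps)
  finally show "vnorm2 (rank_two_probe z1 z2 x m *\<^sub>v v)
      \<le> vnorm2 (rank_two_probe z1 z2 x m *\<^sub>v probe_top) * vnorm2 v
      - 30 * (vnorm2 v - (cmod (vinner v probe_top))\<^sup>2)" .
qed

end

lemma left_symmetric_rank_two_probe_notin:
  assumes ls: "left_symmetric V A" and V: "V \<subseteq> carrier_mat n n" and x: "norming_vec A x"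
    and z: "z1 \<in> carrier_vec n" "vnorm2 z1 = 1" "z2 \<in> carrier_vec n" "vnorm2 z2 = 1"
      "vinner z1 z2 = 0"
    and m: "m \<in> carrier_vec n" "vnorm2 m = 1" "vinner m x = 0" "A *\<^sub>v m = 0\<^sub>v n"
    and Az1: "vinner z1 (A *\<^sub>v x) \<noteq> 0" and Az2: "vinner z2 (A *\<^sub>v x) = 0"
  shows "rank_two_probe z1 z2 x m \<notin> V"
proof
  assume BV: "rank_two_probe z1 z2 x m \<in> V"
  have A: "A \<in> carrier_mat n n" using ls V by (auto simp: left_symmetric_def)
  note x' = norming_vecD[OF x A]
  have xm: "x \<in> carrier_vec n" "vnorm2 x = 1" "m \<in> carrier_vec n" "vnorm2 m = 1" "vinner x m = 0"
    using x' m vinner_eq_0_commute[of x m] by simp_all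
  define B where "B = rank_two_probe z1 z2 x m"
  have B: "B \<in> carrier_mat n n" unfolding B_def by (rule rank_two_probe_carrier[OF z(1,3) xm(1,3)])
  have "vinner (A *\<^sub>v x) z2 = 0" using A xm z Az2 vinner_eq_0_commute[of "A *\<^sub>v x" z2] by simp
  then have "vinner (A *\<^sub>v x) (B *\<^sub>v x) = 0"
    using A xm z m(3) unfolding B_def
    by (simp add: rank_two_probe_mult_vec[OF z xm] vinner_self vinner_add_right vinner_smult_right)
  then have "bj_orth A B" by (rule bj_orth_if_norming_vec_orth[OF A B x])
  then have "bj_orth B A" using ls BV unfolding left_symmetric_def B_def by blast
  moreover have "vinner (B *\<^sub>v probe_top x m) (A *\<^sub>v probe_top x m) = 2 * vinner z1 (A *\<^sub>v x)"
  proof -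
    have "(2::complex) \<cdot>\<^sub>v 0\<^sub>v n = 0\<^sub>v n" by (intro eq_vecI) simp_all
    then have "A *\<^sub>v probe_top x m = complex_of_real (1 / sqrt 5) \<cdot>\<^sub>v (A *\<^sub>v x)"
      using A xm m(4) by (simp add: probe_top_def mult_mat_vec mult_add_distrib_mat_vec[of _ n n])
    then show ?thesis
      using A z xm Az2 unfolding B_def rank_two_probe_top[OF z xm]
      by (simp add: vinner_smult_left vinner_smult_right vinner_add_left)
  qed
  ultimately show False
    using not_bj_orth_if_norm_gap[OF B A probe_top_carrier[OF z xm] vnorm2_probe_top[OF z xm] _
        norm_gap_rank_two_probe[OF z xm, folded B_def]] Az1
    by simp
qed

subsection \<open>Left-symmetric matrices in \<open>V\<^sub>p\<close>\<close>

lemma mem_Vp_iff: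
  assumes "1 \<le> p"
  shows "M \<in> Vp n p \<longleftrightarrow> M \<in> carrier_mat n n \<and> (\<forall>j<n. p - 1 \<le> j \<longrightarrow> M $$ (0,j) = 0)"
proof -
  have "(\<forall>k. p \<le> k \<and> k \<le> n \<longrightarrow> M $$ (0, k - 1) = 0) \<longleftrightarrow> (\<forall>j<n. p - 1 \<le> j \<longrightarrow> M $$ (0,j) = 0)"
  proof (intro iffI allI impI)
    fix j assume "\<forall>k. p \<le> k \<and> k \<le> n \<longrightarrow> M $$ (0, k - 1) = 0" "j < n" "p - 1 \<le> j"
    then show "M $$ (0,j) = 0" using assms by (auto dest: spec[of _ "j + 1"])
  next
    fix k assume "\<forall>j<n. p - 1 \<le> j \<longrightarrow> M $$ (0,j) = 0" and that: "p \<le> k \<and> k \<le> n"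
    moreover have "k - 1 < n" "p - 1 \<le> k - 1" using that assms by arith+
    ultimately show "M $$ (0, k - 1) = 0" by blast
  qed
  then show ?thesis unfolding Vp_def by simp
qed

lemma Vp_subset_carrier: "Vp n p \<subseteq> carrier_mat n n"
  unfolding Vp_def by auto

lemma rank_eq_1_if_product_entries:
  fixes A :: "complex mat"
  assumes A: "A \<in> carrier_mat n n" and nz: "A $$ (i0, j0) \<noteq> 0" "i0 < n" "j0 < n"
    and prod: "\<And>i j. i < n \<Longrightarrow> j < n \<Longrightarrow> A $$ (i,j) = f i * g j"
  shows "vec_space.rank n A = 1"
proof -
  have "vec_space.rank n A \<le> 1"
    by (rule vec_space.rank_le_1_product_entries[OF A, of f g]) (use A prod in auto)
  moreover have minor: "submatrix A {i0} {j0} \<in> carrier_mat 1 1"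
    using A nz unfolding submatrix_def by (simp add: Collect_conv_if)
  have "(LEAST a::nat. a = k) = k" for k by (rule Least_equality) auto
  then have "submatrix A {i0} {j0} $$ (0,0) = A $$ (i0, j0)"
    using A nz unfolding submatrix_def by (simp add: Collect_conv_if)
  then have "det (submatrix A {i0} {j0}) \<noteq> 0" using det_single[OF minor] nz by simp
  then have "card {j. j < n \<and> j \<in> {j0}} \<le> vec_space.rank n A"
    by (rule vec_space.rank_gt_minor[OF A])
  moreover have "card {j. j < n \<and> j \<in> {j0}} = 1" using nz by (simp add: Collect_conv_if)
  ultimately show ?thesis by simp
qed

locale left_symmetric_Vp =
  fixes n p :: nat and A :: "complex mat" and x :: "complex vec"
  assumes p_range: "2 \<le> p" "p \<le> n"
    and left_sym: "left_symmetric (Vp n p) A"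
    and norming: "norming_vec A x"
begin

lemma in_Vp: "A \<in> Vp n p"
  using left_sym by (simp add: left_symmetric_def)

lemma carrier: "A \<in> carrier_mat n n"
  using in_Vp Vp_subset_carrier by blast

lemmas x = norming_vecD[OF norming carrier]

lemma n_pos: "0 < n"
  using p_range by simp

lemma mem_Vp_iff': "M \<in> Vp n p \<longleftrightarrow> M \<in> carrier_mat n n \<and> (\<forall>j<n. p - 1 \<le> j \<longrightarrow> M $$ (0,j) = 0)"
  using p_range by (simp add: mem_Vp_iff)

lemma row0_tail_zero: "j < n \<Longrightarrow> p - 1 \<le> j \<Longrightarrow> A $$ (0,j) = 0"
  using in_Vp by (simp add: mem_Vp_iff')

lemma orth_image_tail_zero:
  assumes w: "w \<in> carrier_vec n" "vinner w x = 0" and i: "1 \<le> i" "i < n"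
  shows "(A *\<^sub>v w) $ i = 0"
proof (cases "w = 0\<^sub>v n")
  case True
  then show ?thesis using carrier i by simp
next
  case False
  define u where "u = vnormalize w"
  have u: "u \<in> carrier_vec n" "vnorm2 u = 1" "vinner x u = 0"
    using w False x vinner_eq_0_commute[of x u]
    by (simp_all add: u_def vnorm2_vnormalize vinner_vnormalize_left)
  define z where "z = Matrix.vec n (\<lambda>k. if k = 0 then 0 else (A *\<^sub>v u) $ k)"
  have z: "z \<in> carrier_vec n" unfolding z_def by simp
  have "outer_prod z u \<in> Vp n p"
    unfolding mem_Vp_iff' using z u by (simp add: outer_prod_index z_def)
  then have "vinner z (A *\<^sub>v u) = 0"
    using left_symmetric_outer_prod_orth[OF left_sym Vp_subset_carrier norming u z] by simp
  moreover have "vinner z (A *\<^sub>v u) = vinner z z"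
    unfolding vinner_def using z by (intro sum.cong) (auto simp: z_def)
  ultimately have "z = 0\<^sub>v n" using z vnorm2_eq_0_iff[of z] by (simp add: vinner_self)
  then have "z $ i = 0" using i by simp
  then have "(A *\<^sub>v u) $ i = 0" using i by (simp add: z_def)
  moreover have "A *\<^sub>v u = complex_of_real (1 / vnorm w) \<cdot>\<^sub>v (A *\<^sub>v w)"
    unfolding u_def vnormalize_def using carrier w(1) by (rule mult_mat_vec)
  ultimately show ?thesis using carrier i vnorm_pos[of w] w False by simp
qed

lemma row0_zero_if_image_head_zero:
  assumes y0: "(A *\<^sub>v x) $ 0 = 0" and j: "j < n"
  shows "A $$ (0,j) = 0"
proof (rule ccontr)
  assume "A $$ (0,j) \<noteq> 0"
  define u where "u = Matrix.vec n (\<lambda>j. cnj (A $$ (0,j)))"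
  have "u $ j \<noteq> 0" using j \<open>A $$ (0,j) \<noteq> 0\<close> by (simp add: u_def)
  then have u: "u \<in> carrier_vec n" "u \<noteq> 0\<^sub>v n" using j by (auto simp del: index_vec simp: u_def)
  have head: "(A *\<^sub>v v) $ 0 = vinner v u" if "v \<in> carrier_vec n" for v
    using carrier that n_pos
    by (simp del: index_mult_mat_vec add: mult_mat_vec_nth vinner_def u_def mult.commute)
  define w where "w = vnormalize u"
  have "vinner x u = 0" using head[OF x(1)] y0 by simp
  then have "vinner u x = 0" by (rule vinner_eq_0_commute[rotated]) (use u x in simp)
  then have w: "w \<in> carrier_vec n" "vnorm2 w = 1" "vinner x w = 0"
    using u x(1) vinner_eq_0_commute[of x w]
    by (simp_all add: w_def vnorm2_vnormalize vinner_vnormalize_left)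
  have "outer_prod (unit_vec n 0) w $$ (0,k) = 0" if "k < n" "p - 1 \<le> k" for k
  proof -
    have "outer_prod (unit_vec n 0) w $$ (0,k) = cnj (w $ k)"
      using outer_prod_index[OF unit_vec_carrier w(1) n_pos that(1)] n_pos by simp
    also have "w $ k = complex_of_real (1 / vnorm u) * cnj (A $$ (0,k))"
      using that by (simp add: w_def vnormalize_index u_def)
    finally show ?thesis using row0_tail_zero[OF that] by simp
  qed
  then have "outer_prod (unit_vec n 0) w \<in> Vp n p"
    unfolding mem_Vp_iff' using w(1) by simp
  then have "vinner (unit_vec n 0) (A *\<^sub>v w) = 0"
    using left_symmetric_outer_prod_orth[OF left_sym Vp_subset_carrier norming w] by simp
  then have "vinner w u = 0"
    using carrier w n_pos head[OF w(1)] by (simp add: vinner_unit_vec_left)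
  then show False
    using u vnorm_pos[of u] vnorm2_eq_0_iff[of u]
    by (simp add: w_def vinner_vnormalize_left vinner_self)
qed

lemma orth_image_head_zero:
  assumes w: "w \<in> carrier_vec n" "vinner w x = 0"
  shows "(A *\<^sub>v w) $ 0 = 0"
proof (cases "(A *\<^sub>v x) $ 0 = 0")
  case True
  then show ?thesis
    using carrier w n_pos row0_zero_if_image_head_zero[OF True]
    by (simp del: index_mult_mat_vec add: mult_mat_vec_nth)
next
  case False
  have "vinner (A *\<^sub>v w) (A *\<^sub>v x) = (\<Sum>k<n. if k = 0 then (A *\<^sub>v w) $ 0 * cnj ((A *\<^sub>v x) $ 0) else 0)"
    unfolding vinner_def using carrier orth_image_tail_zero[OF w]
    by (intro sum.cong) (auto simp del: index_mult_mat_vec)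
  then have "(A *\<^sub>v w) $ 0 * cnj ((A *\<^sub>v x) $ 0) = 0"
    using norming_vec_orth_image[OF carrier norming w] n_pos by simp
  then show ?thesis using False by simp
qed

lemma orth_image_zero:
  assumes "w \<in> carrier_vec n" "vinner w x = 0"
  shows "A *\<^sub>v w = 0\<^sub>v n"
proof (rule eq_vecI)
  fix i assume "i < dim_vec (0\<^sub>v n)"
  then show "(A *\<^sub>v w) $ i = 0\<^sub>v n $ i"
    using orth_image_head_zero[OF assms] orth_image_tail_zero[OF assms, of i]
    by (cases "i = 0") simp_all
qed (use carrier in simp)

lemma mult_vec_eq:
  assumes v: "v \<in> carrier_vec n"
  shows "A *\<^sub>v v = vinner v x \<cdot>\<^sub>v (A *\<^sub>v x)"
proof -
  obtain r where r: "r \<in> carrier_vec n" "v = vinner v x \<cdot>\<^sub>v x + r" "vinner r x = 0"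
    using vec_orth_decomp[OF v x(1,2)] .
  have "A *\<^sub>v v = A *\<^sub>v (vinner v x \<cdot>\<^sub>v x + r)"
    using r(2) by (rule arg_cong)
  also have "\<dots> = vinner v x \<cdot>\<^sub>v (A *\<^sub>v x)"
    using carrier x(1) r(1) orth_image_zero[OF r(1,3)]
    by (simp add: mult_add_distrib_mat_vec[of _ n n] mult_mat_vec)
  finally show ?thesis .
qed

lemma index_eq:
  assumes "i < n" "j < n"
  shows "A $$ (i,j) = (A *\<^sub>v x) $ i * cnj (x $ j)"
  using mult_mat_vec_unit_vec_nth[OF carrier assms] mult_vec_eq[of "unit_vec n j"] assms x(1) carrier
  by (simp add: vinner_unit_vec_left mult.commute del: index_mult_mat_vec)

lemma image_tail_zero:
  assumes n: "3 \<le> n" and k: "1 \<le> k" "k < n"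
  shows "(A *\<^sub>v x) $ k = 0"
proof (rule ccontr)
  assume yk: "(A *\<^sub>v x) $ k \<noteq> 0"
  have y: "A *\<^sub>v x \<in> carrier_vec n" using carrier x(1) by simp
  obtain z1 z2 where z: "z1 \<in> carrier_vec n" "vnorm2 z1 = 1" "z2 \<in> carrier_vec n" "vnorm2 z2 = 1"
      "vinner z1 z2 = 0" and z0: "z1 $ 0 = 0" "z2 $ 0 = 0"
    and Az: "vinner z1 (A *\<^sub>v x) \<noteq> 0" "vinner z2 (A *\<^sub>v x) = 0"
    by (rule exists_orthonormal_pair_off_head[OF y n k yk])
  obtain k' where k': "k' < n" "x $ k' \<noteq> 0" using exists_nonzero_index[OF x(1,2)] .
  define j' where "j' = (if k' = 0 then 1 else 0 :: nat)"
  have j': "j' < n" "k' \<noteq> j'" unfolding j'_def using n by auto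
  obtain m where m: "m \<in> carrier_vec n" "vnorm2 m = 1" "vinner m x = 0"
    using exists_unit_orth_on_pair[OF x(1) k'(1) j' k'(2)] by blast
  have "rank_two_probe z1 z2 x m $$ (0,i) = 0" if "i < n" for i
    using rank_two_probe_index[OF z(1,3) x(1) m(1) n_pos that] z0 by simp
  then have "rank_two_probe z1 z2 x m \<in> Vp n p"
    unfolding mem_Vp_iff' using rank_two_probe_carrier[OF z(1,3) x(1) m(1)] by simp
  moreover have "rank_two_probe z1 z2 x m \<notin> Vp n p"
    by (rule left_symmetric_rank_two_probe_notin[OF left_sym Vp_subset_carrier norming z m
          orth_image_zero[OF m(1,3)] Az])
  ultimately show False by contradiction
qed

lemma image_head_zero:
  assumes p: "3 \<le> p"
  shows "(A *\<^sub>v x) $ 0 = 0"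
proof (rule ccontr)
  assume y0: "(A *\<^sub>v x) $ 0 \<noteq> 0"
  have n: "3 \<le> n" using p p_range by simp
  have x_tail: "x $ j = 0" if "j < n" "p - 1 \<le> j" for j
    using row0_tail_zero[OF that] index_eq[OF n_pos that(1)] y0 by simp
  obtain k where k: "k < n" "x $ k \<noteq> 0" using exists_nonzero_index[OF x(1,2)] .
  have "k < p - 1" using x_tail[OF k(1)] k(2) by force
  \<comment> \<open>\<open>p \<ge> 3\<close> leaves room for a unit \<open>m \<perp> x\<close> supported in the first \<open>p - 1\<close> coordinates\<close>
  define j where "j = (if k = 0 then 1 else 0 :: nat)"
  have j: "j < n" "k \<noteq> j" "j < p - 1" unfolding j_def using p n by auto
  obtain m where m: "m \<in> carrier_vec n" "vnorm2 m = 1" "vinner m x = 0"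
    and m_supp: "\<And>i. i < n \<Longrightarrow> i \<noteq> k \<Longrightarrow> i \<noteq> j \<Longrightarrow> m $ i = 0"
    using exists_unit_orth_on_pair[OF x(1) k(1) j(1,2) k(2)] by blast
  define z1 z2 :: "complex vec" where "z1 = unit_vec n 0" and "z2 = unit_vec n 1"
  have z: "z1 \<in> carrier_vec n" "vnorm2 z1 = 1" "z2 \<in> carrier_vec n" "vnorm2 z2 = 1" "vinner z1 z2 = 0"
    using n by (simp_all add: z1_def z2_def vnorm2_unit_vec vinner_unit_vec_left)
  have Az: "vinner z1 (A *\<^sub>v x) \<noteq> 0" "vinner z2 (A *\<^sub>v x) = 0"
    using carrier x(1) n y0 image_tail_zero[OF n, of 1]
    by (simp_all add: z1_def z2_def vinner_unit_vec_left)
  have "rank_two_probe z1 z2 x m $$ (0,i) = 0" if "i < n" "p - 1 \<le> i" for i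
    using rank_two_probe_index[OF z(1,3) x(1) m(1) n_pos that(1)] m_supp[OF that(1)] \<open>k < p - 1\<close> j that
    by (simp add: z1_def z2_def)
  then have "rank_two_probe z1 z2 x m \<in> Vp n p"
    unfolding mem_Vp_iff' using rank_two_probe_carrier[OF z(1,3) x(1) m(1)] by simp
  moreover have "rank_two_probe z1 z2 x m \<notin> Vp n p"
    by (rule left_symmetric_rank_two_probe_notin[OF left_sym Vp_subset_carrier norming z m
          orth_image_zero[OF m(1,3)] Az])
  ultimately show False by contradiction
qed

lemma eq_0_if_3_le_p:
  assumes "3 \<le> p"
  shows "A = 0\<^sub>m n n"
proof (rule eq_matI)
  fix i j assume "i < dim_row (0\<^sub>m n n :: complex mat)" "j < dim_col (0\<^sub>m n n :: complex mat)"
  then have ij: "i < n" "j < n" by simp_all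
  have "(A *\<^sub>v x) $ i = 0"
    using image_head_zero[OF assms] image_tail_zero[of i] assms p_range ij by (cases "i = 0") simp_all
  then show "A $$ (i,j) = 0\<^sub>m n n $$ (i,j)" using index_eq[OF ij] ij by simp
qed (use carrier in simp_all)

lemma eq_smult_E11:
  assumes "p = 2" "3 \<le> n"
  shows "A = ((A *\<^sub>v x) $ 0 * cnj (x $ 0)) \<cdot>\<^sub>m E11 n"
proof (rule eq_matI)
  fix i j assume "i < dim_row (((A *\<^sub>v x) $ 0 * cnj (x $ 0)) \<cdot>\<^sub>m E11 n)"
    "j < dim_col (((A *\<^sub>v x) $ 0 * cnj (x $ 0)) \<cdot>\<^sub>m E11 n)"
  then have ij: "i < n" "j < n" by (simp_all add: E11_def)
  show "A $$ (i,j) = (((A *\<^sub>v x) $ 0 * cnj (x $ 0)) \<cdot>\<^sub>m E11 n) $$ (i,j)"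
    using index_eq[OF ij] image_tail_zero[OF assms(2), of i] row0_tail_zero[of j] assms(1) ij
    by (cases "i = 0"; cases "j = 0") (simp_all add: E11_def index_eq[symmetric])
qed (use carrier in \<open>simp_all add: E11_def\<close>)

lemma rank_eq_1:
  assumes "A \<noteq> 0\<^sub>m n n"
  shows "vec_space.rank n A = 1"
proof -
  obtain i j where ij: "i < n" "j < n" "A $$ (i,j) \<noteq> 0"
    using assms carrier by (metis eq_matI carrier_matD index_zero_mat)
  show ?thesis
    by (rule rank_eq_1_if_product_entries[OF carrier ij(3,1,2),
        of "\<lambda>i. (A *\<^sub>v x) $ i" "\<lambda>j. cnj (x $ j)"])
      (simp add: index_eq)
qed

end

lemma left_symmetric_VpE:
  assumes "2 \<le> p" "p \<le> n" "left_symmetric (Vp n p) A"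
  obtains x where "left_symmetric_Vp n p A x"
proof -
  have "A \<in> carrier_mat n n" using assms(3) Vp_subset_carrier by (auto simp: left_symmetric_def)
  moreover have "0 < n" using assms(1,2) by simp
  ultimately obtain x where "norming_vec A x" by (rule norming_vec_exists)
  then show thesis using assms by (intro that) (simp add: left_symmetric_Vp_def)
qed

lemma E11_carrier [simp]: "E11 n \<in> carrier_mat n n"
  unfolding E11_def by simp

lemma smult_E11_mult_vec:
  assumes v: "v \<in> carrier_vec n" and n: "0 < n"
  shows "(c \<cdot>\<^sub>m E11 n) *\<^sub>v v = (c * v $ 0) \<cdot>\<^sub>v unit_vec n 0"
proof (rule eq_vecI)
  fix i assume "i < dim_vec ((c * v $ 0) \<cdot>\<^sub>v unit_vec n 0)"
  then have i: "i < n" by simp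
  have "((c \<cdot>\<^sub>m E11 n) *\<^sub>v v) $ i = (\<Sum>j<n. (c \<cdot>\<^sub>m E11 n) $$ (i,j) * v $ j)"
    by (rule mult_mat_vec_nth) (use v i in simp_all)
  also have "\<dots> = (\<Sum>j<n. if j = 0 then (if i = 0 then c * v $ 0 else 0) else 0)"
    using i by (intro sum.cong) (auto simp: E11_def)
  finally show "((c \<cdot>\<^sub>m E11 n) *\<^sub>v v) $ i = ((c * v $ 0) \<cdot>\<^sub>v unit_vec n 0) $ i" using i n by simp
qed (simp add: E11_def)

lemma norm_gap_smult_E11:
  assumes n: "0 < n"
  shows "norm_gap (c \<cdot>\<^sub>m E11 n) (unit_vec n 0) ((cmod c)\<^sup>2)"
  unfolding norm_gap_def
proof
  fix v :: "complex vec" assume "v \<in> carrier_vec (dim_col (c \<cdot>\<^sub>m E11 n))"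
  then have v: "v \<in> carrier_vec n" by (simp add: E11_def)
  show "vnorm2 ((c \<cdot>\<^sub>m E11 n) *\<^sub>v v) \<le> vnorm2 ((c \<cdot>\<^sub>m E11 n) *\<^sub>v unit_vec n 0) * vnorm2 v
      - (cmod c)\<^sup>2 * (vnorm2 v - (cmod (vinner v (unit_vec n 0)))\<^sup>2)"
    using v n
    by (simp add: smult_E11_mult_vec vnorm2_smult vnorm2_unit_vec vinner_unit_vec_right norm_mult
        power_mult_distrib algebra_simps)
qed

lemma bj_orth_smult_E11:
  assumes B: "B \<in> carrier_mat n n" and n: "0 < n" and row0: "\<And>j. j < n \<Longrightarrow> c * B $$ (0,j) = 0"
  shows "bj_orth B (c \<cdot>\<^sub>m E11 n)"
  unfolding bj_orth_def
proof
  fix l :: complex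
  show "opnorm B \<le> opnorm (B + l \<cdot>\<^sub>m (c \<cdot>\<^sub>m E11 n))"
  proof (rule opnorm_mono_pointwise[OF B])
    fix v :: "complex vec" assume v: "v \<in> carrier_vec n"
    have "c * (B *\<^sub>v v) $ 0 = (\<Sum>j<n. c * B $$ (0,j) * v $ j)"
      using B v n by (simp del: index_mult_mat_vec add: mult_mat_vec_nth sum_distrib_left mult.assoc)
    also have "\<dots> = 0" using row0 by (intro sum.neutral) simp
    finally have "vinner (B *\<^sub>v v) ((l * (c * v $ 0)) \<cdot>\<^sub>v unit_vec n 0) = 0"
      using B v n by (auto simp: vinner_smult_right vinner_unit_vec_right)
    then have "vnorm2 ((B + l \<cdot>\<^sub>m (c \<cdot>\<^sub>m E11 n)) *\<^sub>v v)
        = vnorm2 (B *\<^sub>v v) + vnorm2 ((l * (c * v $ 0)) \<cdot>\<^sub>v unit_vec n 0)"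
      using B v n
      by (simp add: add_smult_mat_mult_vec smult_E11_mult_vec smult_smult_assoc vnorm2_add_orth)
    then show "vnorm (B *\<^sub>v v) \<le> vnorm ((B + l \<cdot>\<^sub>m (c \<cdot>\<^sub>m E11 n)) *\<^sub>v v)"
      using vnorm2_nonneg by (simp add: vnorm_eq_sqrt_vnorm2)
  qed (use B in simp)
qed

lemma left_symmetric_smult_E11:
  assumes n: "2 \<le> n"
  shows "left_symmetric (Vp n 2) (c \<cdot>\<^sub>m E11 n)"
  unfolding left_symmetric_def
proof (intro conjI ballI impI)
  show "c \<cdot>\<^sub>m E11 n \<in> Vp n 2" by (auto simp: mem_Vp_iff E11_def)
  fix B assume BV: "B \<in> Vp n 2" and orth: "bj_orth (c \<cdot>\<^sub>m E11 n) B"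
  have B: "B \<in> carrier_mat n n" and row0: "\<And>j. j < n \<Longrightarrow> 1 \<le> j \<Longrightarrow> B $$ (0,j) = 0"
    using BV by (simp_all add: mem_Vp_iff)
  have e0: "unit_vec n 0 \<in> carrier_vec n" "vnorm2 (unit_vec n 0 :: complex vec) = 1"
    using n by (simp_all add: vnorm2_unit_vec)
  have "c * B $$ (0,0) = 0"
  proof (rule ccontr)
    assume "c * B $$ (0,0) \<noteq> 0"
    moreover have "vinner ((c \<cdot>\<^sub>m E11 n) *\<^sub>v unit_vec n 0) (B *\<^sub>v unit_vec n 0) = c * cnj (B $$ (0,0))"
      using B n by (simp add: smult_E11_mult_vec vinner_smult_left vinner_unit_vec_left
          mult_mat_vec_unit_vec_nth del: index_mult_mat_vec)
    ultimately have "\<not> bj_orth (c \<cdot>\<^sub>m E11 n) B"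
      using not_bj_orth_if_norm_gap[OF _ B e0 _ norm_gap_smult_E11] n by simp
    then show False using orth by contradiction
  qed
  then have "c * B $$ (0,j) = 0" if "j < n" for j
    using row0[OF that] by (cases "j = 0") simp_all
  then show "bj_orth B (c \<cdot>\<^sub>m E11 n)" using n by (intro bj_orth_smult_E11[OF B]) simp_all
qed

lemma left_symmetric_Vp_eq_0:
  assumes "3 \<le> p" "p \<le> n" "left_symmetric (Vp n p) A"
  shows "A = 0\<^sub>m n n"
proof -
  obtain x where "left_symmetric_Vp n p A x"
    by (rule left_symmetric_VpE[of p n A]) (use assms in simp_all)
  then show ?thesis using assms(1) by (rule left_symmetric_Vp.eq_0_if_3_le_p)
qed

lemma left_symmetric_Vp_rank_eq_1:
  assumes "2 \<le> p" "p \<le> n" "left_symmetric (Vp n p) A" "A \<noteq> 0\<^sub>m n n"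
  shows "vec_space.rank n A = 1"
proof -
  obtain x where "left_symmetric_Vp n p A x" by (rule left_symmetric_VpE[OF assms(1-3)])
  then show ?thesis using assms(4) by (rule left_symmetric_Vp.rank_eq_1)
qed

lemma left_symmetric_V2_iff:
  assumes "3 \<le> n" "A \<in> Vp n 2"
  shows "left_symmetric (Vp n 2) A \<longleftrightarrow> (\<exists>c. A = c \<cdot>\<^sub>m E11 n)"
proof
  assume "left_symmetric (Vp n 2) A"
  moreover have "2 \<le> (2::nat)" "2 \<le> n" using assms(1) by simp_all
  ultimately obtain x where "left_symmetric_Vp n 2 A x" using left_symmetric_VpE by blast
  then show "\<exists>c. A = c \<cdot>\<^sub>m E11 n" using assms(1) by (blast dest: left_symmetric_Vp.eq_smult_E11)
next
  assume "\<exists>c. A = c \<cdot>\<^sub>m E11 n"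
  then show "left_symmetric (Vp n 2) A" using assms(1) left_symmetric_smult_E11[of n] by auto
qed

theorem lemma3p5:
  fixes n p :: nat
  assumes "2 \<le> n" and "2 \<le> p" and "p \<le> n"
  shows "(3 \<le> p \<longrightarrow> (\<forall>A. left_symmetric (Vp n p) A \<longrightarrow> A = 0\<^sub>m n n))
       \<and> (p = 2 \<longrightarrow>
            (\<exists>A. left_symmetric (Vp n 2) A \<and> A \<noteq> 0\<^sub>m n n)
          \<and> (\<forall>A. left_symmetric (Vp n 2) A \<and> A \<noteq> 0\<^sub>m n n \<longrightarrow> vec_space.rank n A = 1))
       \<and> (p = 2 \<and> 3 \<le> n \<longrightarrow>
            (\<forall>A \<in> Vp n 2. left_symmetric (Vp n 2) A \<longleftrightarrow> (\<exists>c::complex. A = c \<cdot>\<^sub>m E11 n)))"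
proof (intro conjI impI allI ballI)
  fix A assume "3 \<le> p" "left_symmetric (Vp n p) A"
  then show "A = 0\<^sub>m n n" using assms(3) left_symmetric_Vp_eq_0 by blast
next
  have "(1 \<cdot>\<^sub>m E11 n) $$ (0,0) \<noteq> (0\<^sub>m n n :: complex mat) $$ (0,0)"
    using assms(1) by (simp add: E11_def)
  then have "1 \<cdot>\<^sub>m E11 n \<noteq> 0\<^sub>m n n" by metis
  then show "\<exists>A. left_symmetric (Vp n 2) A \<and> A \<noteq> 0\<^sub>m n n"
    using left_symmetric_smult_E11[OF assms(1)] by blast
next
  fix A assume "left_symmetric (Vp n 2) A \<and> A \<noteq> 0\<^sub>m n n"
  then show "vec_space.rank n A = 1" using assms(1) left_symmetric_Vp_rank_eq_1[of 2 n A] by simp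
next
  fix A assume "p = 2 \<and> 3 \<le> n" "A \<in> Vp n 2"
  then show "left_symmetric (Vp n 2) A \<longleftrightarrow> (\<exists>c. A = c \<cdot>\<^sub>m E11 n)" by (simp add: left_symmetric_V2_iff)
qed

end
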